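(* Let $f:\mathbb{R}^d\to\mathbb{R}$ be $\beta$-smooth with minimum value $f^\star$, and run AdaSGD (as defined in the context) for $T$ steps with parameters $\eta,\gamma>0$ using a stochastic gradient oracle with bounded affine noise with parameters $\sigma_0,\sigma_1\ge0$. Then for any $\delta\in(0,1)$, with probability at least $1-\delta$, $\bar\Delta_{T+1}:=\max_{1\le t\le T+1}f(w_t)-f^\star\le F$, where $\Delta_1=f(w_1)-f^\star$, $$F=2\Delta_1+\big(3\log\tfrac T\delta+4C_1\big)\eta\sigma_0+\big(9\log^2\tfrac T\delta+16C_1^2\big)\eta^2\beta\sigma_1^2+\eta^2\beta C_1,$$ $$C_1=\log\Big(1+\frac{2\sigma_0^2T+8(1+\sigma_1^2)(\eta^2\beta^2T^3+\beta\Delta_1T)}{\gamma^2}\Big).$$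
   Context: $\|\cdot\|$ is the Euclidean norm and $\log$ the base-2 logarithm. $\beta$-smooth: $\|\nabla f(x)-\nabla f(y)\|\le\beta\|x-y\|$. Oracle: queried at $w$, returns random $g(w)$ with $\mathbb{E}[g(w)\mid w]=\nabla f(w)$ and, with probability one, $\|g(w)-\nabla f(w)\|^2\le\sigma_0^2+\sigma_1^2\|\nabla f(w)\|^2$. AdaSGD: arbitrary $w_1$; for $t=1,\dots,T$, $g_t=g(w_t)$ a fresh oracle answer ($\mathbb{E}[g_t\mid g_1,\dots,g_{t-1}]=\nabla f(w_t)$), $\eta_t=\eta/\sqrt{\gamma^2+\sum_{s=1}^t\|g_s\|^2}$, $w_{t+1}=w_t-\eta_tg_t$. *)

theory Defs
  imports "HOL-Analysis.Analysis" "HOL-Probability.Probability"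
begin

text \<open>AdaSGD iterates, indexed from 1 (index 0 is unused and set to w1).\<close>
fun adasgd_w :: "'d::real_normed_vector \<Rightarrow> real \<Rightarrow> real \<Rightarrow> (nat \<Rightarrow> 'd) \<Rightarrow> nat \<Rightarrow> 'd" where
  "adasgd_w w1 \<eta> \<gamma> g 0 = w1"
| "adasgd_w w1 \<eta> \<gamma> g (Suc t) =
     (if t = 0 then w1
      else adasgd_w w1 \<eta> \<gamma> g t
           - (\<eta> / sqrt (\<gamma>\<^sup>2 + (\<Sum>s=1..t. (norm (g s))\<^sup>2))) *\<^sub>R g t)"

definition adasgd_filt :: "'m measure \<Rightarrow> (nat \<Rightarrow> 'm \<Rightarrow> 'd::euclidean_space) \<Rightarrow> nat \<Rightarrow> 'm measure" where
  "adasgd_filt M G t =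
     sigma (space M) (\<Union>s\<in>{1..<t}. {G s -` A \<inter> space M | A. A \<in> sets borel})"

end

theory Submission
  imports Defs
begin

text \<open>
  By the descent lemma and telescoping, the gap after \<open>t\<close> steps is at most
  \<open>\<Delta>\<^sub>1 - \<Sum>\<^sub>s \<eta>\<parallel>\<nabla>f(w\<^sub>s)\<parallel>\<^sup>2/(2\<^bold>G\<^sub>s) + \<Sum>\<^sub>s Z\<^sub>s + (5\<eta>R/2 + \<beta>\<eta>\<^sup>2/2) ln(G\<^sub>t\<^sup>2/\<gamma>\<^sup>2)\<close>, where
  \<open>\<^bold>G\<^sub>s\<close> is a step-size denominator that does not see \<open>g\<^sub>s\<close>,
  \<open>Z\<^sub>s = -(\<eta>/\<^bold>G\<^sub>s)\<langle>\<nabla>f(w\<^sub>s), g\<^sub>s - \<nabla>f(w\<^sub>s)\<rangle>\<close> is a martingale difference and \<open>R\<close> bounds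
  the noise radius; the logarithm is bounded a priori by \<open>C = C\<^sub>1 ln 2\<close>. Stopping everything once a gap
  exceeds \<open>F\<close> makes \<open>R = \<sigma>\<^sub>0 + \<sigma>\<^sub>1\<surd>(2\<beta>F)\<close> and \<open>|Z\<^sub>s| \<le> Y\<^sub>s\<close> with \<open>Y\<^sub>s\<^sup>2/(2\<eta>R)\<close> at most half
  the descent term, so \<open>exp(\<theta>\<Sum>Z - \<theta>\<^sup>2\<Sum>Y\<^sup>2)\<close> with \<open>\<theta> = 1/(2\<eta>R)\<close> is a supermartingale.
  Markov's inequality and a union bound over \<open>t \<le> T\<close> show that with probability \<open>1 - \<delta>\<close> the
  martingale never exceeds half the descent terms plus \<open>2\<eta>R ln(T/\<delta>)\<close>; on that event an
  induction on \<open>t\<close> keeps every gap below \<open>F\<close>, which was chosen (AM-GM on the \<open>\<surd>F\<close> term)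
  to dominate \<open>\<Delta>\<^sub>1 + (2 ln(T/\<delta>) + 5C/2)\<eta>R + \<beta>\<eta>\<^sup>2C/2\<close>.
\<close>

section \<open>Smoothness and elementary inequalities\<close>

lemma descent_lemma:
  fixes f :: "'a::real_inner \<Rightarrow> real"
  assumes grad: "\<And>x. GDERIV f x :> df x"
    and smooth: "\<And>x y. norm (df x - df y) \<le> \<beta> * norm (x - y)"
  shows "f y \<le> f x + df x \<bullet> (y - x) + \<beta> / 2 * (norm (y - x))\<^sup>2"
proof -
  define u where "u = y - x"
  define \<phi> where "\<phi> \<tau> = f (x + \<tau> *\<^sub>R u) - \<tau> * (df x \<bullet> u) - \<beta> / 2 * \<tau>\<^sup>2 * (norm u)\<^sup>2" for \<tau>
  have "((\<lambda>\<tau>. f (x + \<tau> *\<^sub>R u)) has_real_derivative (df (x + \<tau> *\<^sub>R u) \<bullet> u)) (at \<tau>)" for \<tau>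
  proof -
    have "((\<lambda>\<tau>. x + \<tau> *\<^sub>R u) has_derivative (\<lambda>h. h *\<^sub>R u)) (at \<tau>)"
      by (auto intro!: derivative_eq_intros)
    moreover have "(f has_derivative (\<lambda>h. h \<bullet> df (x + \<tau> *\<^sub>R u))) (at (x + \<tau> *\<^sub>R u))"
      using grad unfolding gderiv_def by simp
    ultimately show ?thesis
      by (auto dest: has_derivative_compose simp: o_def has_field_derivative_def inner_commute mult_commute_abs)
  qed
  then have \<phi>_deriv: "(\<phi> has_real_derivative ((df (x + \<tau> *\<^sub>R u) - df x) \<bullet> u - \<beta> * \<tau> * (norm u)\<^sup>2)) (at \<tau>)" for \<tau>
    unfolding \<phi>_def inner_diff_left by (auto intro!: derivative_eq_intros)
  have "\<phi> 1 \<le> \<phi> 0"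
  proof (rule DERIV_nonpos_imp_nonincreasing[of 0 1])
    fix \<tau> :: real assume \<tau>: "0 \<le> \<tau>" "\<tau> \<le> 1"
    have "(df (x + \<tau> *\<^sub>R u) - df x) \<bullet> u \<le> norm (df (x + \<tau> *\<^sub>R u) - df x) * norm u"
      by (rule norm_cauchy_schwarz)
    also have "\<dots> \<le> \<beta> * norm (\<tau> *\<^sub>R u) * norm u"
      using smooth[of "x + \<tau> *\<^sub>R u" x] by (intro mult_right_mono) auto
    also have "\<dots> = \<beta> * \<tau> * (norm u)\<^sup>2" using \<tau> by (simp add: power2_eq_square)
    finally have "(df (x + \<tau> *\<^sub>R u) - df x) \<bullet> u - \<beta> * \<tau> * (norm u)\<^sup>2 \<le> 0" by simp
    with \<phi>_deriv show "\<exists>y. (\<phi> has_real_derivative y) (at \<tau>) \<and> y \<le> 0" by blast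
  qed simp
  then show ?thesis unfolding \<phi>_def u_def by simp
qed

lemma lipschitz_const_nonneg:
  fixes df :: "'a::euclidean_space \<Rightarrow> 'b::real_normed_vector"
  assumes "\<And>x y. norm (df x - df y) \<le> \<beta> * norm (x - y)"
  shows "\<beta> \<ge> 0"
proof -
  obtain b :: 'a where "b \<in> Basis" using nonempty_Basis by blast
  then have "norm (b - 0) > 0" by auto
  moreover have "0 \<le> \<beta> * norm (b - 0)" using assms[of b 0] norm_ge_zero order_trans by blast
  ultimately show ?thesis by (simp add: zero_le_mult_iff)
qed

lemma norm_grad_sq_le_gap:
  fixes f :: "'a::euclidean_space \<Rightarrow> real"
  assumes grad: "\<And>x. GDERIV f x :> df x"
    and smooth: "\<And>x y. norm (df x - df y) \<le> \<beta> * norm (x - y)"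
    and fmin: "\<And>x. fstar \<le> f x"
  shows "(norm (df x))\<^sup>2 \<le> 2 * \<beta> * (f x - fstar)"
proof -
  have \<beta>: "\<beta> \<ge> 0" by (rule lipschitz_const_nonneg[OF smooth])
  have gradient_step: "fstar \<le> f x - \<tau> * (norm (df x))\<^sup>2 + \<beta> / 2 * \<tau>\<^sup>2 * (norm (df x))\<^sup>2" for \<tau>
  proof -
    have "fstar \<le> f (x - \<tau> *\<^sub>R df x)" by (rule fmin)
    also have "\<dots> \<le> f x + df x \<bullet> ((x - \<tau> *\<^sub>R df x) - x) + \<beta> / 2 * (norm ((x - \<tau> *\<^sub>R df x) - x))\<^sup>2"
      by (rule descent_lemma[OF grad smooth])
    also have "\<dots> = f x - \<tau> * (norm (df x))\<^sup>2 + \<beta> / 2 * \<tau>\<^sup>2 * (norm (df x))\<^sup>2"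
      by (simp add: power2_norm_eq_inner power_mult_distrib)
    finally show ?thesis .
  qed
  show ?thesis
  proof (cases "\<beta> = 0")
    case True
    have "(norm (df x))\<^sup>2 = 0"
    proof (rule ccontr)
      assume "(norm (df x))\<^sup>2 \<noteq> 0"
      then show False
        using gradient_step[of "(f x - fstar + 1) / (norm (df x))\<^sup>2"] True by simp
    qed
    then show ?thesis using True by simp
  next
    case False
    then have "\<beta> > 0" using \<beta> by simp
    moreover have "fstar \<le> f x - (1 / \<beta>) * (norm (df x))\<^sup>2 + \<beta> / 2 * (1 / \<beta>)\<^sup>2 * (norm (df x))\<^sup>2"
      by (rule gradient_step)
    ultimately show ?thesis by (simp add: field_simps power2_eq_square)
  qed
qed

lemma exp_le_add_exp_square: "exp x \<le> x + exp (x\<^sup>2)" for x :: real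
proof (cases "x \<ge> 1")
  case True
  then have "x \<le> x\<^sup>2" by (simp add: power2_eq_square)
  then show ?thesis using True by (smt (verit) exp_le_cancel_iff)
next
  case False
  have "1 + x\<^sup>2 \<le> exp (x\<^sup>2)" using exp_ge_add_one_self[of "x\<^sup>2"] by simp
  moreover have "exp x \<le> 1 + x + x\<^sup>2"
  proof (cases "x \<ge> 0")
    case True then show ?thesis using False exp_bound[of x] by simp
  next
    case neg: False
    show ?thesis
    proof (cases "x \<le> -1")
      case True
      then have "0 \<le> x * (1 + x)" by (simp add: mult_nonpos_nonpos)
      then show ?thesis using neg by (simp add: power2_eq_square algebra_simps) (smt (verit) exp_le_one_iff)
    next
      case False
      have "1 - x \<le> exp (- x)" using exp_ge_add_one_self[of "- x"] by simp
      moreover have "x * x\<^sup>2 \<le> 0" using neg by (simp add: mult_nonpos_nonneg)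
      then have "1 \<le> (1 - x) * (1 + x + x\<^sup>2)" by (simp add: power2_eq_square algebra_simps)
      ultimately have "1 \<le> exp (- x) * (1 + x + x\<^sup>2)"
        using False neg by (smt (verit) mult_right_mono zero_le_power2)
      then show ?thesis by (simp add: exp_minus field_simps)
    qed
  qed
  ultimately show ?thesis by linarith
qed

lemma exp_le_add_exp_square_of_abs_le:
  fixes \<theta> z y :: real
  assumes "\<bar>z\<bar> \<le> y"
  shows "exp (\<theta> * z) \<le> \<theta> * z + exp (\<theta>\<^sup>2 * y\<^sup>2)"
proof -
  have "(\<theta> * z)\<^sup>2 \<le> \<theta>\<^sup>2 * y\<^sup>2"
  proof -
    have "z\<^sup>2 \<le> y\<^sup>2" using assms abs_le_square_iff[of z y] by (smt (verit) abs_ge_zero power2_abs)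
    then show ?thesis by (simp add: power_mult_distrib mult_left_mono)
  qed
  then show ?thesis using exp_le_add_exp_square[of "\<theta> * z"] by (smt (verit) exp_le_cancel_iff)
qed

lemma sum_div_partial_sums_le_ln:
  fixes x :: "nat \<Rightarrow> real"
  assumes x: "\<And>s. x s \<ge> 0" and c: "c > 0"
  shows "(\<Sum>s=1..t. x s / (c + (\<Sum>r=1..s. x r))) \<le> ln ((c + (\<Sum>r=1..t. x r)) / c)"
proof (induction t)
  case 0 then show ?case using c by simp
next
  case (Suc t)
  define A where "A = c + (\<Sum>r=1..t. x r)"
  have A: "A > 0" unfolding A_def using c x by (simp add: add_pos_nonneg sum_nonneg)
  have xs: "x (Suc t) \<ge> 0" by (rule x)
  have "x (Suc t) / (A + x (Suc t)) \<le> ln ((A + x (Suc t)) / A)"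
  proof -
    have "ln (A / (A + x (Suc t))) \<le> A / (A + x (Suc t)) - 1"
      using A xs by (intro ln_le_minus_one) (simp add: add_pos_nonneg)
    also have "\<dots> = - (x (Suc t) / (A + x (Suc t)))" using A xs by (simp add: field_simps)
    finally show ?thesis using A xs by (simp add: ln_div add_pos_nonneg)
  qed
  moreover have "ln ((A + x (Suc t)) / A) + ln (A / c) = ln ((A + x (Suc t)) / c)"
    using A c xs by (simp add: ln_div add_pos_nonneg)
  ultimately show ?case using Suc.IH unfolding A_def by (simp add: add.assoc)
qed

lemma abs_norm_sq_diff_le:
  fixes D g :: "'a::real_inner"
  assumes r: "norm (g - D) \<le> r"
  shows "\<bar>(norm g)\<^sup>2 - (norm D)\<^sup>2 - r\<^sup>2\<bar> \<le> 2 * (norm D * r) + r\<^sup>2"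
proof -
  have "(norm g)\<^sup>2 - (norm D)\<^sup>2 = 2 * (D \<bullet> (g - D)) + (norm (g - D))\<^sup>2"
    using dot_norm[of D "g - D"] by simp
  moreover have "\<bar>D \<bullet> (g - D)\<bar> \<le> norm D * r"
    using Cauchy_Schwarz_ineq2[of D "g - D"] r by (smt (verit) mult_left_mono norm_ge_zero)
  moreover have "(norm (g - D))\<^sup>2 \<le> r\<^sup>2" using r by (simp add: power_mono)
  ultimately show ?thesis unfolding abs_le_iff by (smt (verit) zero_le_power2)
qed

lemma stepsize_decorrelation_le:
  fixes D g :: "'a::real_inner"
  assumes a: "a > 0" and r: "norm (g - D) \<le> r" and \<eta>: "\<eta> \<ge> 0"
  defines "H \<equiv> sqrt (a + (norm D)\<^sup>2 + r\<^sup>2)" and "G \<equiv> sqrt (a + (norm g)\<^sup>2)"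
  shows "(\<eta> / H - \<eta> / G) * (D \<bullet> g) \<le> \<eta> / H * (norm D)\<^sup>2 / 2 + 5 / 2 * \<eta> * r * ((norm g)\<^sup>2 / G\<^sup>2)"
proof -
  define n where "n = norm D"
  define m where "m = norm g"
  have r0: "r \<ge> 0" using r norm_ge_zero order_trans by blast
  have n0: "n \<ge> 0" "m \<ge> 0" by (auto simp: n_def m_def)
  have H2: "H\<^sup>2 = a + n\<^sup>2 + r\<^sup>2" and G2: "G\<^sup>2 = a + m\<^sup>2"
    unfolding H_def G_def n_def m_def using a by (simp_all add: add_pos_nonneg)
  have Hp: "H > 0" and Gp: "G > 0"
    unfolding H_def G_def using a by (simp_all add: add_pos_nonneg)
  have rH: "r \<le> H" using H2 a Hp r0 by (smt (verit) power2_le_imp_le zero_le_power2)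
  have inner_le: "\<bar>D \<bullet> g\<bar> \<le> n * m" unfolding n_def m_def by (rule Cauchy_Schwarz_ineq2)
  have diffsq: "\<bar>G\<^sup>2 - H\<^sup>2\<bar> \<le> 2 * (n * r) + r\<^sup>2"
    unfolding G2 H2 n_def m_def using abs_norm_sq_diff_le[OF r] by (simp add: algebra_simps)
  have "(\<eta> / H - \<eta> / G) * (D \<bullet> g) = \<eta> * ((G - H) * (D \<bullet> g)) / (G * H)"
    using Hp Gp by (simp add: field_simps)
  also have "\<dots> = \<eta> * ((G - H) * (D \<bullet> g)) * (G + H) / (G * H * (G + H))"
    using Hp Gp by simp
  also have "\<dots> = \<eta> * ((G\<^sup>2 - H\<^sup>2) * (D \<bullet> g)) / (G * H * (G + H))"
    by (simp add: power2_eq_square algebra_simps)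
  also have "\<dots> \<le> \<eta> * ((2 * (n * r) + r\<^sup>2) * (n * m)) / (G * H * (G + H))"
  proof -
    have "(G\<^sup>2 - H\<^sup>2) * (D \<bullet> g) \<le> \<bar>G\<^sup>2 - H\<^sup>2\<bar> * \<bar>D \<bullet> g\<bar>" by (simp add: abs_mult[symmetric])
    also have "\<dots> \<le> (2 * (n * r) + r\<^sup>2) * (n * m)" using diffsq inner_le by (intro mult_mono) auto
    finally show ?thesis using \<eta> Hp Gp by (intro divide_right_mono mult_left_mono) auto
  qed
  also have "\<dots> \<le> \<eta> * ((2 * (n * r) + r\<^sup>2) * (n * m)) / (G * H * H)"
    using Hp Gp \<eta> n0 r0 by (intro divide_left_mono mult_nonneg_nonneg mult_left_mono mult_pos_pos) auto
  also have "\<dots> \<le> \<eta> / H * n\<^sup>2 / 2 + 5 / 2 * \<eta> * r * (m\<^sup>2 / G\<^sup>2)"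
  proof -
    define y where "y = m / G"
    define z where "z = (2 * n + r) * r * y / H"
    have "(2 * n + r)\<^sup>2 \<le> 5 * H\<^sup>2"
      unfolding H2 using a zero_le_power2[of "n - 2 * r"] by (simp add: power2_eq_square algebra_simps)
    have "z\<^sup>2 = (2 * n + r)\<^sup>2 * (r\<^sup>2 * y\<^sup>2) / H\<^sup>2"
      unfolding z_def by (simp add: power_mult_distrib power_divide)
    also have "\<dots> \<le> 5 * H\<^sup>2 * (r\<^sup>2 * y\<^sup>2) / H\<^sup>2"
      using \<open>(2 * n + r)\<^sup>2 \<le> 5 * H\<^sup>2\<close> by (intro divide_right_mono mult_right_mono) auto
    also have "\<dots> = 5 * (r * r) * y\<^sup>2" using Hp by (simp add: power2_eq_square)
    also have "\<dots> \<le> 5 * (r * H) * y\<^sup>2" using rH r0 by (intro mult_right_mono mult_left_mono) auto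
    finally have "2 * n * z \<le> n\<^sup>2 + 5 * (r * H) * y\<^sup>2"
      using zero_le_power2[of "n - z"] by (simp add: power2_diff)
    then have "\<eta> / (2 * H) * (2 * n * z) \<le> \<eta> / (2 * H) * (n\<^sup>2 + 5 * (r * H) * y\<^sup>2)"
      using \<eta> Hp by (intro mult_left_mono) auto
    then show ?thesis
      unfolding z_def y_def using Hp Gp by (simp add: field_simps power2_eq_square)
  qed
  finally show ?thesis unfolding n_def m_def .
qed

lemma self_bounding_quadratic_term_le:
  fixes k L C \<beta> \<eta> \<sigma>1 :: real
  assumes k: "0 < k" "k \<le> 3/4" and b: "\<beta> \<ge> 0"
  shows "((2 * (k * L) + 5 / 2 * (k * C)) * \<eta>)\<^sup>2 * (2 * \<beta> * \<sigma>1\<^sup>2) \<le> (9 * L\<^sup>2 + 16 * C\<^sup>2) * \<eta>\<^sup>2 * \<beta> * \<sigma>1\<^sup>2"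
proof -
  define P where "P = (2 * (k * L) + 5 / 2 * (k * C)) * \<eta>"
  have a1: "(2 * L + 5 / 2 * C)\<^sup>2 \<le> 8 * L\<^sup>2 + 25 / 2 * C\<^sup>2"
  proof -
    have "0 \<le> (2 * L - 5 / 2 * C)\<^sup>2" by simp
    moreover have "(2 * L - 5 / 2 * C)\<^sup>2 = 4 * L\<^sup>2 - 10 * (L * C) + 25 / 4 * C\<^sup>2" by (simp add: power2_eq_square algebra_simps)
    moreover have "(2 * L + 5 / 2 * C)\<^sup>2 = 4 * L\<^sup>2 + 10 * (L * C) + 25 / 4 * C\<^sup>2" by (simp add: power2_eq_square algebra_simps)
    ultimately show ?thesis by linarith
  qed
  have k2: "k\<^sup>2 \<le> 9 / 16" using k power_mono[of k "3/4" 2] by (simp add: power_divide)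
  have "P = k * \<eta> * (2 * L + 5 / 2 * C)" unfolding P_def by (simp add: algebra_simps)
  then have "P\<^sup>2 = k\<^sup>2 * \<eta>\<^sup>2 * (2 * L + 5 / 2 * C)\<^sup>2" by (simp add: power_mult_distrib)
  also have "\<dots> \<le> k\<^sup>2 * \<eta>\<^sup>2 * (8 * L\<^sup>2 + 25 / 2 * C\<^sup>2)" using a1 by (intro mult_left_mono) auto
  also have "\<dots> \<le> 9 / 16 * \<eta>\<^sup>2 * (8 * L\<^sup>2 + 25 / 2 * C\<^sup>2)" using k2 by (intro mult_right_mono) auto
  finally have "P\<^sup>2 * (2 * \<beta> * \<sigma>1\<^sup>2) \<le> 9 / 16 * \<eta>\<^sup>2 * (8 * L\<^sup>2 + 25 / 2 * C\<^sup>2) * (2 * \<beta> * \<sigma>1\<^sup>2)"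
    using b by (intro mult_right_mono) auto
  also have "\<dots> = (9 * L\<^sup>2 + 225 / 16 * C\<^sup>2) * \<eta>\<^sup>2 * \<beta> * \<sigma>1\<^sup>2" by (simp add: algebra_simps)
  also have "\<dots> \<le> (9 * L\<^sup>2 + 16 * C\<^sup>2) * \<eta>\<^sup>2 * \<beta> * \<sigma>1\<^sup>2" using b by (intro mult_right_mono) auto
  finally show ?thesis unfolding P_def .
qed

lemma gap_bound_self_bounding:
  fixes k L C \<beta> \<eta> \<sigma>0 \<sigma>1 \<Delta> F :: real
  assumes k: "0 < k" "k \<le> 3/4" and L: "L \<ge> 0" and C: "C \<ge> 0" and b: "\<beta> \<ge> 0" and e: "\<eta> > 0"
    and s0: "\<sigma>0 \<ge> 0" and s1: "\<sigma>1 \<ge> 0" and D: "\<Delta> \<ge> 0"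
    and F: "F = 2 * \<Delta> + (3 * L + 4 * C) * \<eta> * \<sigma>0 + (9 * L\<^sup>2 + 16 * C\<^sup>2) * \<eta>\<^sup>2 * \<beta> * \<sigma>1\<^sup>2 + \<eta>\<^sup>2 * \<beta> * C"
  shows "\<Delta> + (2 * (k * L) + 5 / 2 * (k * C)) * \<eta> * (\<sigma>0 + \<sigma>1 * sqrt (2 * \<beta> * F)) + \<beta> / 2 * \<eta>\<^sup>2 * (k * C) \<le> F"
proof -
  have F0: "F \<ge> 0" unfolding F using L C b e s0 s1 D by (simp add: add_nonneg_nonneg)
  define u where "u = sqrt F"
  have uF: "u\<^sup>2 = F" unfolding u_def using F0 by simp
  define P where "P = (2 * (k * L) + 5 / 2 * (k * C)) * \<eta>"
  define q where "q = \<sigma>1 * sqrt (2 * \<beta>)"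
  have q2: "q\<^sup>2 = 2 * \<beta> * \<sigma>1\<^sup>2" unfolding q_def using b by (simp add: power_mult_distrib)
  have sq: "sqrt (2 * \<beta> * F) = sqrt (2 * \<beta>) * u" unfolding u_def by (simp add: real_sqrt_mult)
  \<comment> \<open>AM-GM absorbs the \<open>\<surd>F\<close> term into \<open>F / 2\<close>\<close>
  have "0 \<le> (u - P * q)\<^sup>2" by simp
  then have amgm: "P * (q * u) \<le> u\<^sup>2 / 2 + P\<^sup>2 * q\<^sup>2 / 2" by (simp add: power2_diff power_mult_distrib algebra_simps)
  have lhs: "\<Delta> + (2 * (k * L) + 5 / 2 * (k * C)) * \<eta> * (\<sigma>0 + \<sigma>1 * sqrt (2 * \<beta> * F)) + \<beta> / 2 * \<eta>\<^sup>2 * (k * C)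
      = \<Delta> + P * \<sigma>0 + P * (q * u) + \<beta> / 2 * \<eta>\<^sup>2 * (k * C)"
    unfolding P_def q_def sq by (simp add: algebra_simps)
  have t1: "2 * (P * \<sigma>0) \<le> (3 * L + 4 * C) * \<eta> * \<sigma>0"
  proof -
    have "2 * (2 * (k * L) + 5 / 2 * (k * C)) \<le> 3 * L + 4 * C"
    proof -
      have "(4 * k) * L \<le> 3 * L" using k L by (intro mult_right_mono) auto
      moreover have "(5 * k) * C \<le> 4 * C" using k C by (intro mult_right_mono) auto
      ultimately show ?thesis by (simp add: algebra_simps)
    qed
    then show ?thesis unfolding P_def using e s0 by (simp add: mult_right_mono mult.assoc[symmetric])
  qed
  have t2: "P\<^sup>2 * q\<^sup>2 \<le> (9 * L\<^sup>2 + 16 * C\<^sup>2) * \<eta>\<^sup>2 * \<beta> * \<sigma>1\<^sup>2"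
    unfolding q2 P_def by (rule self_bounding_quadratic_term_le[OF k b])
  have t3: "\<beta> * \<eta>\<^sup>2 * (k * C) \<le> \<eta>\<^sup>2 * \<beta> * C"
  proof -
    have "k * C \<le> C" using k C by (simp add: mult_left_le_one_le)
    then have "(\<beta> * \<eta>\<^sup>2) * (k * C) \<le> (\<beta> * \<eta>\<^sup>2) * C" using b by (intro mult_left_mono) auto
    then show ?thesis by (simp add: algebra_simps)
  qed
  define A1 where "A1 = (3 * L + 4 * C) * \<eta> * \<sigma>0"
  define A2 where "A2 = (9 * L\<^sup>2 + 16 * C\<^sup>2) * \<eta>\<^sup>2 * \<beta> * \<sigma>1\<^sup>2"
  define A3 where "A3 = \<eta>\<^sup>2 * \<beta> * C"
  define B where "B = \<beta> * \<eta>\<^sup>2 * (k * C)"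
  have FA: "F = 2 * \<Delta> + A1 + A2 + A3" unfolding F A1_def A2_def A3_def ..
  have lB: "\<beta> / 2 * \<eta>\<^sup>2 * (k * C) = B / 2" unfolding B_def by simp
  show ?thesis using lhs lB amgm t1[folded A1_def] t2[folded A2_def] t3[folded A3_def B_def] uF FA by linarith
qed

lemma gap_bound_log2_self_bounding:
  fixes a c \<Delta> \<beta> \<eta> \<sigma>0 \<sigma>1 F :: real
  assumes a: "1 \<le> a" and c: "1 \<le> c" and \<Delta>: "0 \<le> \<Delta>" and \<beta>: "0 \<le> \<beta>" and \<eta>: "0 < \<eta>"
    and \<sigma>: "0 \<le> \<sigma>0" "0 \<le> \<sigma>1"
    and F: "F = 2 * \<Delta> + (3 * log 2 a + 4 * log 2 c) * \<eta> * \<sigma>0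
      + (9 * (log 2 a)\<^sup>2 + 16 * (log 2 c)\<^sup>2) * \<eta>\<^sup>2 * \<beta> * \<sigma>1\<^sup>2 + \<eta>\<^sup>2 * \<beta> * log 2 c"
  shows "0 \<le> F"
    and "\<Delta> + (2 * ln a + 5 / 2 * ln c) * \<eta> * (\<sigma>0 + \<sigma>1 * sqrt (2 * \<beta> * F)) + \<beta> / 2 * \<eta>\<^sup>2 * ln c \<le> F"
proof -
  have logs: "0 \<le> log 2 a" "0 \<le> log 2 c" using a c by simp_all
  then show "0 \<le> F" unfolding F using \<Delta> \<beta> \<eta> \<sigma> by simp
  have "ln a = ln 2 * log 2 a" "ln c = ln 2 * log 2 c" using a c by (simp_all add: log_def)
  moreover have "ln (2::real) \<le> 3 / 4" using ln2_le_25_over_36 by simp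
  ultimately show "\<Delta> + (2 * ln a + 5 / 2 * ln c) * \<eta> * (\<sigma>0 + \<sigma>1 * sqrt (2 * \<beta> * F)) + \<beta> / 2 * \<eta>\<^sup>2 * ln c \<le> F"
    using gap_bound_self_bounding[OF _ _ logs \<beta> \<eta> \<sigma> \<Delta> F] by simp
qed

section \<open>An exponential supermartingale\<close>

lemma space_adasgd_filt [simp]: "space (adasgd_filt M G t) = space M"
  unfolding adasgd_filt_def by (rule space_measure_of_conv)

lemma sets_adasgd_filt:
  "sets (adasgd_filt M G t) = sigma_sets (space M) (\<Union>s\<in>{1..<t}. {G s -` A \<inter> space M | A. A \<in> sets borel})"
  unfolding adasgd_filt_def by (rule sets_measure_of) auto

lemma subalgebra_adasgd_filt:
  assumes "\<And>s. G s \<in> borel_measurable M"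
  shows "subalgebra M (adasgd_filt M G t)"
proof -
  have "(\<Union>s\<in>{1..<t}. {G s -` A \<inter> space M | A. A \<in> sets borel}) \<subseteq> sets M"
    using assms by (auto intro: measurable_sets)
  then have "sets (adasgd_filt M G t) \<subseteq> sets M"
    unfolding sets_adasgd_filt by (rule sets.sigma_sets_subset)
  then show ?thesis unfolding subalgebra_def by simp
qed

lemma measurable_adasgd_filt:
  fixes G :: "nat \<Rightarrow> 'a \<Rightarrow> 'b::euclidean_space"
  assumes "1 \<le> s" "s < t"
  shows "G s \<in> borel_measurable (adasgd_filt M G t)"
proof (rule measurableI)
  fix A :: "'b set" assume "A \<in> sets borel"
  then have "G s -` A \<inter> space M \<in> (\<Union>s\<in>{1..<t}. {G s -` A \<inter> space M | A. A \<in> sets borel})"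
    using assms by (intro UN_I[of s]) auto
  then show "G s -` A \<inter> space (adasgd_filt M G t) \<in> sets (adasgd_filt M G t)"
    unfolding sets_adasgd_filt space_adasgd_filt by (rule sigma_sets.Basic)
qed simp

lemma mult_inner_diff_eq_sum_Basis:
  fixes d x :: "'a::euclidean_space"
  shows "h * (d \<bullet> (x - d)) = (\<Sum>b\<in>Basis. h * (d \<bullet> b) * (x \<bullet> b) - h * (d \<bullet> b) * (d \<bullet> b))"
proof -
  have "d \<bullet> (x - d) = (\<Sum>b\<in>Basis. (d \<bullet> b) * (x \<bullet> b - d \<bullet> b))"
    using euclidean_inner[of d "x - d"] by (simp add: inner_diff_left)
  then have "h * (d \<bullet> (x - d)) = (\<Sum>b\<in>Basis. h * ((d \<bullet> b) * (x \<bullet> b - d \<bullet> b)))"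
    by (simp add: sum_distrib_left)
  also have "\<dots> = (\<Sum>b\<in>Basis. h * (d \<bullet> b) * (x \<bullet> b) - h * (d \<bullet> b) * (d \<bullet> b))"
    by (rule sum.cong) (simp_all add: algebra_simps)
  finally show ?thesis .
qed

lemma integral_mult_eq_of_cond_exp:
  assumes N: "sigma_finite_subalgebra M N" and int: "integrable M (\<lambda>\<omega>. c \<omega> * x \<omega>)"
    and c [measurable]: "c \<in> borel_measurable N"
    and [measurable]: "x \<in> borel_measurable M" "y \<in> borel_measurable M"
    and cond_exp: "AE \<omega> in M. real_cond_exp M N x \<omega> = y \<omega>"
  shows "(\<integral>\<omega>. c \<omega> * x \<omega> \<partial>M) = (\<integral>\<omega>. c \<omega> * y \<omega> \<partial>M)"
proof -
  interpret sigma_finite_subalgebra M N by (rule N)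
  have [measurable]: "c \<in> borel_measurable M" by (rule measurable_from_subalg[OF subalg c])
  have "(\<integral>\<omega>. c \<omega> * x \<omega> \<partial>M) = (\<integral>\<omega>. c \<omega> * real_cond_exp M N x \<omega> \<partial>M)"
    by (rule real_cond_exp_intg(2)[OF int c, symmetric]) measurable
  also have "\<dots> = (\<integral>\<omega>. c \<omega> * y \<omega> \<partial>M)"
  proof (rule integral_cong_AE)
    show "AE \<omega> in M. c \<omega> * real_cond_exp M N x \<omega> = c \<omega> * y \<omega>"
      using cond_exp by eventually_elim simp
  qed measurable
  finally show ?thesis .
qed

lemma integral_mult_inner_cond_centered_eq_0:
  fixes X D :: "'a \<Rightarrow> 'd::euclidean_space" and h :: "'a \<Rightarrow> real"
  assumes N: "sigma_finite_subalgebra M N" and fin: "finite_measure M"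
    and X [measurable]: "X \<in> borel_measurable M" and X_bound: "AE \<omega> in M. norm (X \<omega>) \<le> BX"
    and D [measurable]: "D \<in> borel_measurable N" and D_bound: "\<And>\<omega>. norm (D \<omega>) \<le> BD"
    and h [measurable]: "h \<in> borel_measurable N" and h_bound: "AE \<omega> in M. \<bar>h \<omega>\<bar> \<le> Bh"
    and cond_exp: "\<And>b. b \<in> Basis \<Longrightarrow> AE \<omega> in M. real_cond_exp M N (\<lambda>\<omega>. X \<omega> \<bullet> b) \<omega> = D \<omega> \<bullet> b"
  shows "(\<integral>\<omega>. h \<omega> * (D \<omega> \<bullet> (X \<omega> - D \<omega>)) \<partial>M) = 0"
proof -
  interpret N: sigma_finite_subalgebra M N by (rule N)
  interpret finite_measure M by (rule fin)
  have D_M [measurable]: "D \<in> borel_measurable M" and [measurable]: "h \<in> borel_measurable M"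
    using measurable_from_subalg[OF N.subalg D] measurable_from_subalg[OF N.subalg h] by auto
  define c where "c b \<omega> = h \<omega> * (D \<omega> \<bullet> b)" for b \<omega>
  have c_N [measurable]: "c b \<in> borel_measurable N" for b unfolding c_def by measurable
  have [measurable]: "c b \<in> borel_measurable M" for b unfolding c_def by measurable
  have c_bound: "AE \<omega> in M. \<bar>c b \<omega>\<bar> \<le> Bh * BD" if b: "b \<in> Basis" for b
    using h_bound
  proof eventually_elim
    case (elim \<omega>)
    have "\<bar>D \<omega> \<bullet> b\<bar> \<le> BD" using Basis_le_norm[OF b, of "D \<omega>"] D_bound[of \<omega>] by linarith
    then show ?case unfolding c_def abs_mult using elim abs_ge_zero[of "h \<omega>"] by (intro mult_mono) auto
  qed
  have int_coordinate: "integrable M (\<lambda>\<omega>. c b \<omega> * (V \<omega> \<bullet> b))"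
    if b: "b \<in> Basis" and [measurable]: "V \<in> borel_measurable M" and V: "AE \<omega> in M. norm (V \<omega>) \<le> BV"
    for b and V :: "'a \<Rightarrow> 'd" and BV
  proof (rule integrable_const_bound)
    show "AE \<omega> in M. norm (c b \<omega> * (V \<omega> \<bullet> b)) \<le> Bh * BD * BV"
      using c_bound[OF b] V
    proof eventually_elim
      case (elim \<omega>)
      have "\<bar>V \<omega> \<bullet> b\<bar> \<le> BV" using Basis_le_norm[OF b, of "V \<omega>"] elim(2) by linarith
      moreover have "0 \<le> Bh * BD" using elim(1) abs_ge_zero[of "c b \<omega>"] by linarith
      ultimately have "\<bar>c b \<omega>\<bar> * \<bar>V \<omega> \<bullet> b\<bar> \<le> Bh * BD * BV"
        using elim(1) by (intro mult_mono) auto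
      then show ?case by (simp add: abs_mult)
    qed
  qed measurable
  have int_X: "integrable M (\<lambda>\<omega>. c b \<omega> * (X \<omega> \<bullet> b))" if "b \<in> Basis" for b
    using int_coordinate[OF that X X_bound] .
  have "AE \<omega> in M. norm (D \<omega>) \<le> BD" using D_bound by simp
  then have int_D: "integrable M (\<lambda>\<omega>. c b \<omega> * (D \<omega> \<bullet> b))" if "b \<in> Basis" for b
    by (rule int_coordinate[OF that D_M])
  have coordinate: "(\<integral>\<omega>. c b \<omega> * (X \<omega> \<bullet> b) \<partial>M) = (\<integral>\<omega>. c b \<omega> * (D \<omega> \<bullet> b) \<partial>M)"
    if b: "b \<in> Basis" for b
    by (rule integral_mult_eq_of_cond_exp[OF N int_X[OF b] c_N _ _ cond_exp[OF b]]) measurable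
  have pointwise: "h \<omega> * (D \<omega> \<bullet> (X \<omega> - D \<omega>)) = (\<Sum>b\<in>Basis. c b \<omega> * (X \<omega> \<bullet> b) - c b \<omega> * (D \<omega> \<bullet> b))"
    for \<omega>
    unfolding c_def by (rule mult_inner_diff_eq_sum_Basis)
  have "(\<integral>\<omega>. h \<omega> * (D \<omega> \<bullet> (X \<omega> - D \<omega>)) \<partial>M)
      = (\<Sum>b\<in>Basis. (\<integral>\<omega>. c b \<omega> * (X \<omega> \<bullet> b) - c b \<omega> * (D \<omega> \<bullet> b) \<partial>M))"
    unfolding pointwise by (rule Bochner_Integration.integral_sum) (use int_X int_D in auto)
  also have "\<dots> = 0"
  proof (intro sum.neutral ballI)
    fix b :: 'd assume b: "b \<in> Basis"
    show "(\<integral>\<omega>. c b \<omega> * (X \<omega> \<bullet> b) - c b \<omega> * (D \<omega> \<bullet> b) \<partial>M) = 0"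
      using Bochner_Integration.integral_diff[OF int_X[OF b] int_D[OF b]] coordinate[OF b] by simp
  qed
  finally show ?thesis .
qed

locale predictably_bounded_mart_diff = prob_space M
  for M :: "'a measure" +
  fixes N :: "nat \<Rightarrow> 'a measure" and Z Y :: "nat \<Rightarrow> 'a \<Rightarrow> real" and n :: nat and B :: real
  assumes subalgebra: "\<And>k. k \<in> {1..n} \<Longrightarrow> subalgebra M (N k)"
    and Z_N: "\<And>s k. 1 \<le> s \<Longrightarrow> s < k \<Longrightarrow> k \<le> n \<Longrightarrow> Z s \<in> borel_measurable (N k)"
    and Y_N: "\<And>s k. 1 \<le> s \<Longrightarrow> s \<le> k \<Longrightarrow> k \<le> n \<Longrightarrow> Y s \<in> borel_measurable (N k)"
    and Z_M: "\<And>s. s \<in> {1..n} \<Longrightarrow> Z s \<in> borel_measurable M"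
    and abs_Z_le_Y: "\<And>s. s \<in> {1..n} \<Longrightarrow> AE \<omega> in M. \<bar>Z s \<omega>\<bar> \<le> Y s \<omega>"
    and Y_le: "\<And>s. s \<in> {1..n} \<Longrightarrow> AE \<omega> in M. Y s \<omega> \<le> B"
    and centered: "\<And>k h Bh. k \<in> {1..n} \<Longrightarrow> h \<in> borel_measurable (N k) \<Longrightarrow>
      AE \<omega> in M. \<bar>h \<omega>\<bar> \<le> Bh \<Longrightarrow> (\<integral>\<omega>. h \<omega> * Z k \<omega> \<partial>M) = 0"
begin

definition exp_mart :: "real \<Rightarrow> nat \<Rightarrow> 'a \<Rightarrow> real" where
  "exp_mart \<theta> m \<omega> = exp (\<theta> * (\<Sum>s=1..m. Z s \<omega>) - \<theta>\<^sup>2 * (\<Sum>s=1..m. (Y s \<omega>)\<^sup>2))"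

lemma exp_mart_pos: "exp_mart \<theta> m \<omega> > 0"
  unfolding exp_mart_def by simp

lemma borel_measurable_exp_mart_N: "m < k \<Longrightarrow> k \<le> n \<Longrightarrow> exp_mart \<theta> m \<in> borel_measurable (N k)"
proof -
  assume "m < k" "k \<le> n"
  then have [measurable]: "Z s \<in> borel_measurable (N k)" "Y s \<in> borel_measurable (N k)" if "s \<in> {1..m}" for s
    using Z_N Y_N that by auto
  show ?thesis unfolding exp_mart_def by measurable
qed

lemma borel_measurable_Y: "s \<in> {1..n} \<Longrightarrow> Y s \<in> borel_measurable M"
  using measurable_from_subalg[OF subalgebra Y_N[of s s]] by auto

lemma borel_measurable_exp_mart: "m \<le> n \<Longrightarrow> exp_mart \<theta> m \<in> borel_measurable M"
proof -
  assume "m \<le> n"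
  then have [measurable]: "Z s \<in> borel_measurable M" "Y s \<in> borel_measurable M" if "s \<in> {1..m}" for s
    using Z_M borel_measurable_Y that by auto
  show ?thesis unfolding exp_mart_def by measurable
qed

lemma AE_exp_mart_le: "m \<le> n \<Longrightarrow> AE \<omega> in M. exp_mart \<theta> m \<omega> \<le> exp (\<bar>\<theta>\<bar> * (m * B))"
proof -
  assume "m \<le> n"
  then have "AE \<omega> in M. \<forall>s\<in>{1..m}. \<bar>Z s \<omega>\<bar> \<le> Y s \<omega> \<and> Y s \<omega> \<le> B"
    by (intro AE_finite_allI eventually_conj abs_Z_le_Y Y_le) auto
  then show ?thesis
  proof eventually_elim
    case (elim \<omega>)
    have "\<bar>\<Sum>s=1..m. Z s \<omega>\<bar> \<le> (\<Sum>s=1..m. B)"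
      using elim by (intro order_trans[OF sum_abs] sum_mono) fastforce
    then have "\<bar>\<theta>\<bar> * \<bar>\<Sum>s=1..m. Z s \<omega>\<bar> \<le> \<bar>\<theta>\<bar> * (m * B)"
      by (simp add: mult_left_mono)
    then have "\<theta> * (\<Sum>s=1..m. Z s \<omega>) \<le> \<bar>\<theta>\<bar> * (m * B)"
      by (metis abs_ge_self abs_mult order_trans)
    moreover have "0 \<le> \<theta>\<^sup>2 * (\<Sum>s=1..m. (Y s \<omega>)\<^sup>2)" by (simp add: sum_nonneg)
    ultimately show ?case unfolding exp_mart_def by simp
  qed
qed

lemma integrable_exp_mart: "m \<le> n \<Longrightarrow> integrable M (exp_mart \<theta> m)"
proof (rule integrable_const_bound)
  assume "m \<le> n"
  show "AE \<omega> in M. norm (exp_mart \<theta> m \<omega>) \<le> exp (\<bar>\<theta>\<bar> * (m * B))"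
    using AE_exp_mart_le[OF \<open>m \<le> n\<close>] by eventually_elim (simp add: exp_mart_def)
  show "exp_mart \<theta> m \<in> borel_measurable M" using \<open>m \<le> n\<close> by (rule borel_measurable_exp_mart)
qed

text \<open>\<open>exp x \<le> x + exp (x\<^sup>2)\<close> splits the new factor into a centred term and the compensator.\<close>
lemma exp_mart_Suc_le:
  assumes "\<bar>Z (Suc m) \<omega>\<bar> \<le> Y (Suc m) \<omega>"
  shows "exp_mart \<theta> (Suc m) \<omega>
    \<le> \<theta> * (exp_mart \<theta> m \<omega> * exp (- (\<theta>\<^sup>2 * (Y (Suc m) \<omega>)\<^sup>2)) * Z (Suc m) \<omega>) + exp_mart \<theta> m \<omega>"
proof -
  define h where "h = exp_mart \<theta> m \<omega> * exp (- (\<theta>\<^sup>2 * (Y (Suc m) \<omega>)\<^sup>2))"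
  have "exp_mart \<theta> (Suc m) \<omega> = exp ((\<theta> * (\<Sum>s=1..m. Z s \<omega>) - \<theta>\<^sup>2 * (\<Sum>s=1..m. (Y s \<omega>)\<^sup>2)
      + - (\<theta>\<^sup>2 * (Y (Suc m) \<omega>)\<^sup>2)) + \<theta> * Z (Suc m) \<omega>)"
    unfolding exp_mart_def by (simp add: algebra_simps)
  also have "\<dots> = h * exp (\<theta> * Z (Suc m) \<omega>)" unfolding h_def exp_mart_def by (simp only: exp_add)
  also have "\<dots> \<le> h * (\<theta> * Z (Suc m) \<omega> + exp (\<theta>\<^sup>2 * (Y (Suc m) \<omega>)\<^sup>2))"
    using exp_le_add_exp_square_of_abs_le[OF assms] exp_mart_pos[of \<theta> m \<omega>]
    unfolding h_def by (intro mult_left_mono) auto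
  also have "\<dots> = \<theta> * (h * Z (Suc m) \<omega>)
      + exp_mart \<theta> m \<omega> * (exp (- (\<theta>\<^sup>2 * (Y (Suc m) \<omega>)\<^sup>2)) * exp (\<theta>\<^sup>2 * (Y (Suc m) \<omega>)\<^sup>2))"
    unfolding h_def by (simp add: algebra_simps)
  also have "\<dots> = \<theta> * (h * Z (Suc m) \<omega>) + exp_mart \<theta> m \<omega>"
    by (simp add: exp_minus_inverse mult.commute)
  finally show ?thesis unfolding h_def .
qed

lemma integral_exp_mart_Suc_le:
  assumes m: "Suc m \<le> n"
  shows "(\<integral>\<omega>. exp_mart \<theta> (Suc m) \<omega> \<partial>M) \<le> (\<integral>\<omega>. exp_mart \<theta> m \<omega> \<partial>M)"
proof -
  define h where "h \<omega> = exp_mart \<theta> m \<omega> * exp (- (\<theta>\<^sup>2 * (Y (Suc m) \<omega>)\<^sup>2))" for \<omega>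
  have [measurable]: "exp_mart \<theta> m \<in> borel_measurable (N (Suc m))" "Y (Suc m) \<in> borel_measurable (N (Suc m))"
    using borel_measurable_exp_mart_N Y_N m by auto
  have h_N: "h \<in> borel_measurable (N (Suc m))" unfolding h_def by measurable
  have [measurable]: "h \<in> borel_measurable M" "Z (Suc m) \<in> borel_measurable M"
    using measurable_from_subalg[OF subalgebra h_N] Z_M m by auto
  have h_nonneg: "0 \<le> h \<omega>" for \<omega> unfolding h_def using exp_mart_pos[of \<theta> m \<omega>] by simp
  have h_le: "h \<omega> \<le> exp_mart \<theta> m \<omega>" for \<omega> unfolding h_def exp_mart_def by (simp add: mult_le_cancel_left1)
  have "AE \<omega> in M. exp_mart \<theta> m \<omega> \<le> exp (\<bar>\<theta>\<bar> * (m * B))" using AE_exp_mart_le m by simp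
  then have h_bound: "AE \<omega> in M. \<bar>h \<omega>\<bar> \<le> exp (\<bar>\<theta>\<bar> * (m * B))"
    by eventually_elim (metis abs_of_nonneg h_le h_nonneg order_trans)
  have ZY: "AE \<omega> in M. \<bar>Z (Suc m) \<omega>\<bar> \<le> Y (Suc m) \<omega>" using abs_Z_le_Y m by simp
  have "AE \<omega> in M. Y (Suc m) \<omega> \<le> B" using Y_le m by simp
  with h_bound ZY have "AE \<omega> in M. norm (h \<omega> * Z (Suc m) \<omega>) \<le> exp (\<bar>\<theta>\<bar> * (m * B)) * B"
  proof eventually_elim
    case (elim \<omega>)
    have "\<bar>Z (Suc m) \<omega>\<bar> \<le> B" using elim(2,3) by linarith
    from mult_mono[OF elim(1) this] show ?case by (simp add: abs_mult)
  qed
  then have int_hZ: "integrable M (\<lambda>\<omega>. h \<omega> * Z (Suc m) \<omega>)"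
    by (rule integrable_const_bound) measurable
  have "AE \<omega> in M. exp_mart \<theta> (Suc m) \<omega> \<le> \<theta> * (h \<omega> * Z (Suc m) \<omega>) + exp_mart \<theta> m \<omega>"
    using ZY unfolding h_def by eventually_elim (rule exp_mart_Suc_le)
  then have "(\<integral>\<omega>. exp_mart \<theta> (Suc m) \<omega> \<partial>M) \<le> (\<integral>\<omega>. \<theta> * (h \<omega> * Z (Suc m) \<omega>) + exp_mart \<theta> m \<omega> \<partial>M)"
    using integrable_exp_mart m int_hZ by (intro integral_mono_AE) auto
  also have "\<dots> = \<theta> * (\<integral>\<omega>. h \<omega> * Z (Suc m) \<omega> \<partial>M) + (\<integral>\<omega>. exp_mart \<theta> m \<omega> \<partial>M)"
    using integrable_exp_mart m int_hZ by simp
  also have "(\<integral>\<omega>. h \<omega> * Z (Suc m) \<omega> \<partial>M) = 0"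
    using centered[OF _ h_N h_bound] m by simp
  finally show ?thesis by simp
qed

lemma integral_exp_mart_le_1: "m \<le> n \<Longrightarrow> (\<integral>\<omega>. exp_mart \<theta> m \<omega> \<partial>M) \<le> 1"
proof (induction m)
  case 0
  then show ?case by (simp add: exp_mart_def prob_space)
next
  case (Suc m)
  then show ?case using integral_exp_mart_Suc_le[of m \<theta>] by simp
qed

end

section \<open>Deterministic analysis of AdaSGD\<close>

definition measurable_before :: "'m measure \<Rightarrow> (nat \<Rightarrow> 'm \<Rightarrow> 'd::euclidean_space) \<Rightarrow> nat \<Rightarrow> bool" where
  "measurable_before N G k \<longleftrightarrow> (\<forall>s. 1 \<le> s \<longrightarrow> s < k \<longrightarrow> G s \<in> borel_measurable N)"

lemma measurable_before_mono: "measurable_before N G k \<Longrightarrow> j \<le> k \<Longrightarrow> measurable_before N G j"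
  unfolding measurable_before_def by auto

locale adasgd =
  fixes f :: "'d::euclidean_space \<Rightarrow> real" and df :: "'d \<Rightarrow> 'd"
    and \<beta> fstar \<eta> \<gamma> \<sigma>0 \<sigma>1 :: real and w1 :: 'd
  assumes grad: "\<And>x. GDERIV f x :> df x"
    and smooth: "\<And>x y. norm (df x - df y) \<le> \<beta> * norm (x - y)"
    and fmin: "\<And>x. fstar \<le> f x"
    and eta: "\<eta> > 0" and gamma: "\<gamma> > 0"
    and sig0: "\<sigma>0 \<ge> 0" and sig1: "\<sigma>1 \<ge> 0"
begin

definition iter :: "(nat \<Rightarrow> 'd) \<Rightarrow> nat \<Rightarrow> 'd" where
  "iter g t = adasgd_w w1 \<eta> \<gamma> g t"

definition accum :: "(nat \<Rightarrow> 'd) \<Rightarrow> nat \<Rightarrow> real" where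
  "accum g t = \<gamma>\<^sup>2 + (\<Sum>s=1..t. (norm (g s))\<^sup>2)"

definition grad_at :: "(nat \<Rightarrow> 'd) \<Rightarrow> nat \<Rightarrow> 'd" where
  "grad_at g t = df (iter g t)"

definition noise_radius :: "(nat \<Rightarrow> 'd) \<Rightarrow> nat \<Rightarrow> real" where
  "noise_radius g t = sqrt (\<sigma>0\<^sup>2 + \<sigma>1\<^sup>2 * (norm (grad_at g t))\<^sup>2)"

text \<open>The paper's \<open>\<^bold>G\<^sub>t\<close>: replacing \<open>\<parallel>g\<^sub>t\<parallel>\<^sup>2\<close> in \<open>accum g t\<close> by its worst case
  \<open>\<parallel>\<nabla>f(w\<^sub>t)\<parallel>\<^sup>2 + noise_radius\<^sup>2\<close> gives a step size that no longer depends on \<open>g\<^sub>t\<close>.\<close>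
definition proxy_denom :: "(nat \<Rightarrow> 'd) \<Rightarrow> nat \<Rightarrow> real" where
  "proxy_denom g t = sqrt (accum g (t - 1) + (norm (grad_at g t))\<^sup>2 + (noise_radius g t)\<^sup>2)"

definition gaps_le :: "(nat \<Rightarrow> 'd) \<Rightarrow> real \<Rightarrow> nat \<Rightarrow> bool" where
  "gaps_le g F t \<longleftrightarrow> (\<forall>k\<in>{1..t}. f (iter g k) - fstar \<le> F)"

text \<open>The three processes below are stopped as soon as a gap exceeds \<open>F\<close>; before that,
  \<open>noise_radius\<close> is at most \<open>\<sigma>0 + \<sigma>1 \<surd>(2\<beta>F)\<close>.\<close>
definition mart_incr :: "(nat \<Rightarrow> 'd) \<Rightarrow> real \<Rightarrow> nat \<Rightarrow> real" where
  "mart_incr g F t =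
     (if gaps_le g F t then - (\<eta> / proxy_denom g t * (grad_at g t \<bullet> (g t - grad_at g t))) else 0)"

definition descent_term :: "(nat \<Rightarrow> 'd) \<Rightarrow> real \<Rightarrow> nat \<Rightarrow> real" where
  "descent_term g F t = (if gaps_le g F t then \<eta> / proxy_denom g t * (norm (grad_at g t))\<^sup>2 else 0)"

definition mart_incr_bound :: "(nat \<Rightarrow> 'd) \<Rightarrow> real \<Rightarrow> nat \<Rightarrow> real" where
  "mart_incr_bound g F t =
     (if gaps_le g F t then \<eta> / proxy_denom g t * norm (grad_at g t) * noise_radius g t else 0)"

lemma smooth_nonneg: "\<beta> \<ge> 0"
  by (rule lipschitz_const_nonneg[OF smooth])

lemma iter_1 [simp]: "iter g 1 = w1" "iter g (Suc 0) = w1"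
  by (simp_all add: iter_def)

lemma iter_Suc: "t \<ge> 1 \<Longrightarrow> iter g (Suc t) = iter g t - (\<eta> / sqrt (accum g t)) *\<^sub>R g t"
  by (simp add: iter_def accum_def)

lemma accum_ge: "\<gamma>\<^sup>2 \<le> accum g t"
  unfolding accum_def by (simp add: sum_nonneg)

lemma accum_pos: "accum g t > 0"
  using accum_ge[of g t] gamma by (smt (verit) zero_less_power2)

lemma accum_Suc: "accum g (Suc t) = accum g t + (norm (g (Suc t)))\<^sup>2"
  unfolding accum_def by simp

lemma accum_mono: "s \<le> t \<Longrightarrow> accum g s \<le> accum g t"
  unfolding accum_def by (rule add_left_mono, rule sum_mono2) auto

lemma f_iter_Suc_le:
  assumes "t \<ge> 1"
  shows "f (iter g (Suc t)) \<le> f (iter g t) - (\<eta> / sqrt (accum g t)) * (grad_at g t \<bullet> g t)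
    + \<beta> / 2 * (\<eta>\<^sup>2 * ((norm (g t))\<^sup>2 / accum g t))"
proof -
  have "f (iter g (Suc t)) \<le> f (iter g t) + df (iter g t) \<bullet> (iter g (Suc t) - iter g t)
      + \<beta> / 2 * (norm (iter g (Suc t) - iter g t))\<^sup>2"
    by (rule descent_lemma[OF grad smooth])
  moreover have "iter g (Suc t) - iter g t = - ((\<eta> / sqrt (accum g t)) *\<^sub>R g t)"
    using iter_Suc[OF assms] by simp
  moreover have "(norm ((\<eta> / sqrt (accum g t)) *\<^sub>R g t))\<^sup>2 = \<eta>\<^sup>2 * ((norm (g t))\<^sup>2 / accum g t)"
    using accum_pos[of g t] by (simp add: power_mult_distrib power_divide)
  ultimately show ?thesis by (simp add: grad_at_def)
qed

lemma f_iter_le_telescoped: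
  "t \<ge> 1 \<Longrightarrow> f (iter g (Suc t)) \<le> f w1 + (\<Sum>s=1..t. - (\<eta> / sqrt (accum g s)) * (grad_at g s \<bullet> g s)
      + \<beta> / 2 * (\<eta>\<^sup>2 * ((norm (g s))\<^sup>2 / accum g s)))"
proof (induction t rule: dec_induct)
  case base
  then show ?case using f_iter_Suc_le[of 1 g] by simp
next
  case (step t)
  then show ?case using f_iter_Suc_le[of "Suc t" g] by simp
qed

lemma noise_radius_nonneg: "noise_radius g t \<ge> 0"
  unfolding noise_radius_def by simp

lemma noise_radius_le: "noise_radius g t \<le> \<sigma>0 + \<sigma>1 * norm (grad_at g t)"
proof -
  have "noise_radius g t \<le> sqrt (\<sigma>0\<^sup>2) + sqrt (\<sigma>1\<^sup>2 * (norm (grad_at g t))\<^sup>2)"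
    unfolding noise_radius_def by (rule sqrt_add_le_add_sqrt) auto
  also have "\<dots> = \<sigma>0 + \<sigma>1 * norm (grad_at g t)" using sig0 sig1 by (simp add: real_sqrt_mult)
  finally show ?thesis .
qed

lemma noise_radius_le_of_gaps_le:
  assumes "gaps_le g F s" and "s \<ge> 1"
  shows "noise_radius g s \<le> \<sigma>0 + \<sigma>1 * sqrt (2 * \<beta> * F)"
proof -
  have "f (iter g s) - fstar \<le> F" using assms unfolding gaps_le_def by auto
  then have "(norm (grad_at g s))\<^sup>2 \<le> 2 * \<beta> * F"
    using norm_grad_sq_le_gap[OF grad smooth fmin, of "iter g s"] smooth_nonneg
    unfolding grad_at_def by (smt (verit) mult_left_mono zero_le_mult_iff)
  then have "norm (grad_at g s) \<le> sqrt (2 * \<beta> * F)" using real_le_rsqrt by blast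
  then show ?thesis using noise_radius_le[of g s] sig1 by (smt (verit) mult_left_mono)
qed

lemma descent_step_le:
  assumes s: "s \<ge> 1" and noise: "norm (g s - grad_at g s) \<le> noise_radius g s"
    and R: "noise_radius g s \<le> R" and gaps: "gaps_le g F s"
  shows "- (\<eta> / sqrt (accum g s)) * (grad_at g s \<bullet> g s)
    \<le> - descent_term g F s / 2 + mart_incr g F s + 5 / 2 * \<eta> * R * ((norm (g s))\<^sup>2 / accum g s)"
proof -
  define a where "a = accum g (s - 1)"
  have a: "a > 0" unfolding a_def by (rule accum_pos)
  have accum_s: "accum g s = a + (norm (g s))\<^sup>2" unfolding a_def using s accum_Suc[of g "s - 1"] by simp
  have proxy: "proxy_denom g s = sqrt (a + (norm (grad_at g s))\<^sup>2 + (noise_radius g s)\<^sup>2)"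
    unfolding proxy_denom_def a_def ..
  have "(sqrt (accum g s))\<^sup>2 = accum g s" using accum_pos[of g s] by simp
  then have decorrelation: "(\<eta> / proxy_denom g s - \<eta> / sqrt (accum g s)) * (grad_at g s \<bullet> g s)
      \<le> \<eta> / proxy_denom g s * (norm (grad_at g s))\<^sup>2 / 2
        + 5 / 2 * \<eta> * noise_radius g s * ((norm (g s))\<^sup>2 / accum g s)"
    using stepsize_decorrelation_le[OF a noise, of \<eta>] eta unfolding proxy[symmetric] accum_s[symmetric] by simp
  have "5 / 2 * \<eta> * noise_radius g s * ((norm (g s))\<^sup>2 / accum g s) \<le> 5 / 2 * \<eta> * R * ((norm (g s))\<^sup>2 / accum g s)"
    using R eta accum_pos[of g s] by (intro mult_right_mono mult_left_mono) auto
  moreover have "grad_at g s \<bullet> g s = (norm (grad_at g s))\<^sup>2 + grad_at g s \<bullet> (g s - grad_at g s)"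
    by (simp add: inner_diff_right power2_norm_eq_inner)
  ultimately show ?thesis
    using decorrelation gaps unfolding descent_term_def mart_incr_def by (simp add: algebra_simps)
qed

lemma gaps_le_mono: "gaps_le g F t \<Longrightarrow> s \<le> t \<Longrightarrow> gaps_le g F s"
  unfolding gaps_le_def by auto

lemma gap_Suc_le:
  assumes t: "t \<ge> 1" and gaps: "gaps_le g F t"
    and noise: "\<forall>s\<in>{1..t}. norm (g s - grad_at g s) \<le> noise_radius g s"
    and R: "R = \<sigma>0 + \<sigma>1 * sqrt (2 * \<beta> * F)" and F: "F \<ge> 0"
  shows "f (iter g (Suc t)) - fstar \<le> (f w1 - fstar) - (\<Sum>s=1..t. descent_term g F s) / 2
    + (\<Sum>s=1..t. mart_incr g F s) + (5 / 2 * \<eta> * R + \<beta> / 2 * \<eta>\<^sup>2) * ln (accum g t / \<gamma>\<^sup>2)"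
proof -
  define c where "c = 5 / 2 * \<eta> * R + \<beta> / 2 * \<eta>\<^sup>2"
  have c: "c \<ge> 0" unfolding c_def R using eta sig0 sig1 F smooth_nonneg by simp
  have step: "- (\<eta> / sqrt (accum g s)) * (grad_at g s \<bullet> g s) + \<beta> / 2 * (\<eta>\<^sup>2 * ((norm (g s))\<^sup>2 / accum g s))
      \<le> - descent_term g F s / 2 + mart_incr g F s + c * ((norm (g s))\<^sup>2 / accum g s)"
    if s: "s \<in> {1..t}" for s
  proof -
    have "gaps_le g F s" using gaps_le_mono[OF gaps] s by simp
    then have "- (\<eta> / sqrt (accum g s)) * (grad_at g s \<bullet> g s)
        \<le> - descent_term g F s / 2 + mart_incr g F s + 5 / 2 * \<eta> * R * ((norm (g s))\<^sup>2 / accum g s)"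
      using descent_step_le noise noise_radius_le_of_gaps_le R s by simp
    then show ?thesis unfolding c_def by (simp add: algebra_simps)
  qed
  have "(\<Sum>s=1..t. (norm (g s))\<^sup>2 / accum g s) \<le> ln (accum g t / \<gamma>\<^sup>2)"
    using sum_div_partial_sums_le_ln[of "\<lambda>s. (norm (g s))\<^sup>2" "\<gamma>\<^sup>2" t] gamma unfolding accum_def by simp
  then have log: "c * (\<Sum>s=1..t. (norm (g s))\<^sup>2 / accum g s) \<le> c * ln (accum g t / \<gamma>\<^sup>2)"
    using c by (rule mult_left_mono)
  have "f (iter g (Suc t)) \<le> f w1 + (\<Sum>s=1..t. - (\<eta> / sqrt (accum g s)) * (grad_at g s \<bullet> g s)
      + \<beta> / 2 * (\<eta>\<^sup>2 * ((norm (g s))\<^sup>2 / accum g s)))"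
    by (rule f_iter_le_telescoped[OF t])
  also have "\<dots> \<le> f w1 + (\<Sum>s=1..t. - descent_term g F s / 2 + mart_incr g F s + c * ((norm (g s))\<^sup>2 / accum g s))"
    using step by (intro add_left_mono sum_mono) auto
  also have "\<dots> = f w1 - (\<Sum>s=1..t. descent_term g F s) / 2 + (\<Sum>s=1..t. mart_incr g F s)
      + c * (\<Sum>s=1..t. (norm (g s))\<^sup>2 / accum g s)"
    by (simp add: sum.distrib sum_subtractf sum_distrib_left sum_divide_distrib sum_negf)
  finally show ?thesis using log unfolding c_def by linarith
qed

lemma gaps_le_of_concentration:
  assumes T: "T \<ge> 1"
    and noise: "\<forall>s\<in>{1..T}. norm (g s - grad_at g s) \<le> noise_radius g s"
    and conc: "\<forall>t\<in>{1..T}. (\<Sum>s=1..t. mart_incr g F s) \<le> (\<Sum>s=1..t. descent_term g F s) / 2 + 2 * Lln * \<eta> * R"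
    and R: "R = \<sigma>0 + \<sigma>1 * sqrt (2 * \<beta> * F)" and F: "F \<ge> 0"
    and Lln: "Lln \<ge> 0" and Cln: "ln (accum g T / \<gamma>\<^sup>2) \<le> Cln"
    and F_big: "(f w1 - fstar) + (2 * Lln + 5 / 2 * Cln) * \<eta> * R + \<beta> / 2 * \<eta>\<^sup>2 * Cln \<le> F"
  shows "gaps_le g F (T + 1)"
proof -
  have R0: "R \<ge> 0" unfolding R using sig0 sig1 F smooth_nonneg by simp
  have Cln0: "Cln \<ge> 0"
    using Cln accum_ge[of g T] gamma by (smt (verit) ln_ge_zero le_divide_eq_1_pos zero_less_power2)
  have "gaps_le g F t" if "1 \<le> t" "t \<le> T + 1" for t
    using that
  proof (induction t rule: dec_induct)
    case base
    have "0 \<le> (2 * Lln + 5 / 2 * Cln) * \<eta> * R" "0 \<le> \<beta> / 2 * \<eta>\<^sup>2 * Cln"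
      using Lln Cln0 eta R0 smooth_nonneg by simp_all
    then show ?case using F_big unfolding gaps_le_def by auto
  next
    case (step t)
    then have gaps: "gaps_le g F t" and tT: "t \<le> T" by simp_all
    have "ln (accum g t / \<gamma>\<^sup>2) \<le> Cln"
      using Cln accum_mono[OF tT, of g] accum_pos[of g t] gamma by (smt (verit) divide_right_mono ln_le_cancel_iff zero_less_divide_iff zero_less_power2)
    then have "(5 / 2 * \<eta> * R + \<beta> / 2 * \<eta>\<^sup>2) * ln (accum g t / \<gamma>\<^sup>2) \<le> (5 / 2 * \<eta> * R + \<beta> / 2 * \<eta>\<^sup>2) * Cln"
      using eta R0 smooth_nonneg by (intro mult_left_mono) auto
    moreover have "(\<Sum>s=1..t. mart_incr g F s) \<le> (\<Sum>s=1..t. descent_term g F s) / 2 + 2 * Lln * \<eta> * R"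
      using conc step tT by simp
    moreover have "f (iter g (Suc t)) - fstar \<le> (f w1 - fstar) - (\<Sum>s=1..t. descent_term g F s) / 2
        + (\<Sum>s=1..t. mart_incr g F s) + (5 / 2 * \<eta> * R + \<beta> / 2 * \<eta>\<^sup>2) * ln (accum g t / \<gamma>\<^sup>2)"
      using gap_Suc_le[OF step.hyps(1) gaps _ R F] noise tT by simp
    ultimately have "f (iter g (Suc t)) - fstar \<le> F" using F_big by (simp add: algebra_simps)
    then show ?case using gaps unfolding gaps_le_def by (auto simp: le_Suc_eq)
  qed
  then show ?thesis using T by simp
qed

lemma Max_gap_le_iff_gaps_le:
  "Max ((\<lambda>t. f (adasgd_w w1 \<eta> \<gamma> g t)) ` {1..T+1}) - fstar \<le> F \<longleftrightarrow> gaps_le g F (T + 1)"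
proof -
  have "Max ((\<lambda>t. f (adasgd_w w1 \<eta> \<gamma> g t)) ` {1..T+1}) \<le> F + fstar
      \<longleftrightarrow> (\<forall>t\<in>{1..T+1}. f (iter g t) \<le> F + fstar)"
    unfolding iter_def by (subst Max_le_iff) auto
  then show ?thesis unfolding gaps_le_def by (smt (verit, best) ball_cong)
qed

lemma norm_iter_Suc_diff_le: "t \<ge> 1 \<Longrightarrow> norm (iter g (Suc t) - iter g t) \<le> \<eta>"
proof -
  assume t: "t \<ge> 1"
  have "(norm (g t))\<^sup>2 \<le> accum g t" using t accum_Suc[of g "t - 1"] accum_pos[of g "t - 1"] by simp
  then have g: "norm (g t) \<le> sqrt (accum g t)" using real_le_rsqrt by blast
  have sqrt_pos: "sqrt (accum g t) > 0" using accum_pos[of g t] by simp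
  have "norm (iter g (Suc t) - iter g t) = \<eta> / sqrt (accum g t) * norm (g t)"
    using iter_Suc[OF t, of g] eta sqrt_pos by simp
  also have "\<dots> \<le> \<eta> / sqrt (accum g t) * sqrt (accum g t)" using g eta sqrt_pos by (intro mult_left_mono) auto
  finally show ?thesis using sqrt_pos by simp
qed

lemma norm_iter_diff_le: "t \<ge> 1 \<Longrightarrow> norm (iter g t - w1) \<le> \<eta> * (real t - 1)"
proof (induction t rule: dec_induct)
  case base then show ?case by simp
next
  case (step t)
  have "norm (iter g (Suc t) - w1) \<le> norm (iter g (Suc t) - iter g t) + norm (iter g t - w1)"
    by (rule norm_diff_triangle_le[OF order_refl order_refl])
  also have "\<dots> \<le> \<eta> + \<eta> * (real t - 1)" using norm_iter_Suc_diff_le[OF step.hyps(1), of g] step.IH by simp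
  finally show ?case by (simp add: algebra_simps)
qed

definition grad_bound :: "nat \<Rightarrow> real" where
  "grad_bound T = norm (df w1) + \<beta> * \<eta> * real T"

lemma grad_bound_nonneg: "grad_bound T \<ge> 0"
  unfolding grad_bound_def using smooth_nonneg eta by simp

lemma norm_grad_at_le: "t \<in> {1..T} \<Longrightarrow> norm (grad_at g t) \<le> grad_bound T"
proof -
  assume t: "t \<in> {1..T}"
  have "norm (grad_at g t) \<le> norm (df w1) + norm (grad_at g t - df w1)" by (rule norm_triangle_sub)
  also have "norm (grad_at g t - df w1) \<le> \<beta> * norm (iter g t - w1)" unfolding grad_at_def by (rule smooth)
  also have "\<dots> \<le> \<beta> * (\<eta> * real T)"
  proof (rule mult_left_mono[OF _ smooth_nonneg])
    have "\<eta> * (real t - 1) \<le> \<eta> * real T" using t eta by (intro mult_left_mono) auto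
    then show "norm (iter g t - w1) \<le> \<eta> * real T" using norm_iter_diff_le[of t g] t by simp
  qed
  finally show ?thesis unfolding grad_bound_def by (simp add: mult.assoc)
qed

lemma norm_oracle_sq_le:
  assumes t: "t \<in> {1..T}" and noise: "norm (g t - grad_at g t) \<le> noise_radius g t"
  shows "(norm (g t))\<^sup>2 \<le> 2 * \<sigma>0\<^sup>2 + 8 * (1 + \<sigma>1\<^sup>2) * (\<beta> * (f w1 - fstar) + \<eta>\<^sup>2 * \<beta>\<^sup>2 * (real T)\<^sup>2)"
proof -
  define n where "n = norm (grad_at g t)"
  define r where "r = noise_radius g t"
  have sq_sum: "(a + b)\<^sup>2 \<le> 2 * a\<^sup>2 + 2 * b\<^sup>2" for a b :: real
    using zero_le_power2[of "a - b"] by (simp add: power2_sum power2_diff)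
  have "norm (g t) \<le> n + r" unfolding n_def r_def using noise norm_triangle_sub[of "g t" "grad_at g t"] by linarith
  then have "(norm (g t))\<^sup>2 \<le> (n + r)\<^sup>2" by (simp add: power_mono)
  also have "\<dots> \<le> 2 * \<sigma>0\<^sup>2 + 2 * (1 + \<sigma>1\<^sup>2) * n\<^sup>2"
    using sq_sum[of n r] unfolding r_def noise_radius_def n_def by (simp add: algebra_simps)
  also have "\<dots> \<le> 2 * \<sigma>0\<^sup>2 + 2 * (1 + \<sigma>1\<^sup>2) * (4 * (\<beta> * (f w1 - fstar)) + 2 * (\<beta>\<^sup>2 * \<eta>\<^sup>2 * (real T)\<^sup>2))"
  proof -
    have "n \<le> norm (df w1) + \<beta> * \<eta> * real T"
      unfolding n_def using norm_grad_at_le[OF t] unfolding grad_bound_def .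
    then have "n\<^sup>2 \<le> (norm (df w1) + \<beta> * \<eta> * real T)\<^sup>2" by (simp add: n_def power_mono)
    also have "\<dots> \<le> 2 * (norm (df w1))\<^sup>2 + 2 * (\<beta> * \<eta> * real T)\<^sup>2" by (rule sq_sum)
    also have "(norm (df w1))\<^sup>2 \<le> 2 * (\<beta> * (f w1 - fstar))"
      using norm_grad_sq_le_gap[OF grad smooth fmin, of w1] by simp
    finally have "n\<^sup>2 \<le> 4 * (\<beta> * (f w1 - fstar)) + 2 * (\<beta>\<^sup>2 * \<eta>\<^sup>2 * (real T)\<^sup>2)"
      by (simp add: power_mult_distrib)
    then show ?thesis by (intro add_left_mono mult_left_mono) auto
  qed
  also have "\<dots> \<le> 2 * \<sigma>0\<^sup>2 + 8 * (1 + \<sigma>1\<^sup>2) * (\<beta> * (f w1 - fstar) + \<eta>\<^sup>2 * \<beta>\<^sup>2 * (real T)\<^sup>2)"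
    by (simp add: algebra_simps)
  finally show ?thesis .
qed

lemma accum_le:
  assumes noise: "\<forall>s\<in>{1..T}. norm (g s - grad_at g s) \<le> noise_radius g s"
  shows "accum g T \<le> \<gamma>\<^sup>2 + (2 * \<sigma>0\<^sup>2 * real T
    + 8 * (1 + \<sigma>1\<^sup>2) * (\<eta>\<^sup>2 * \<beta>\<^sup>2 * real T ^ 3 + \<beta> * (f w1 - fstar) * real T))"
proof -
  define K where "K = 2 * \<sigma>0\<^sup>2 + 8 * (1 + \<sigma>1\<^sup>2) * (\<beta> * (f w1 - fstar) + \<eta>\<^sup>2 * \<beta>\<^sup>2 * (real T)\<^sup>2)"
  have "(\<Sum>s=1..T. (norm (g s))\<^sup>2) \<le> (\<Sum>s=1..T. K)"
    using norm_oracle_sq_le noise unfolding K_def by (intro sum_mono) auto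
  also have "\<dots> = 2 * \<sigma>0\<^sup>2 * real T + 8 * (1 + \<sigma>1\<^sup>2) * (\<eta>\<^sup>2 * \<beta>\<^sup>2 * real T ^ 3 + \<beta> * (f w1 - fstar) * real T)"
    unfolding K_def by (simp add: algebra_simps power2_eq_square power3_eq_cube)
  finally show ?thesis unfolding accum_def by simp
qed

lemma proxy_denom_ge: "\<gamma> \<le> proxy_denom g t"
proof -
  have "\<gamma>\<^sup>2 \<le> accum g (t - 1) + (norm (grad_at g t))\<^sup>2 + (noise_radius g t)\<^sup>2"
    using accum_ge[of g "t - 1"] by (smt (verit) zero_le_power2)
  then have "sqrt (\<gamma>\<^sup>2) \<le> proxy_denom g t" unfolding proxy_denom_def by (rule real_sqrt_le_mono)
  then show ?thesis using gamma by simp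
qed

lemma proxy_denom_pos: "proxy_denom g t > 0"
  using proxy_denom_ge[of g t] gamma by simp

lemma noise_radius_le_proxy_denom: "noise_radius g t \<le> proxy_denom g t"
proof -
  have "(noise_radius g t)\<^sup>2 \<le> accum g (t - 1) + (norm (grad_at g t))\<^sup>2 + (noise_radius g t)\<^sup>2"
    using accum_pos[of g "t - 1"] by simp
  then have "sqrt ((noise_radius g t)\<^sup>2) \<le> proxy_denom g t" unfolding proxy_denom_def by (rule real_sqrt_le_mono)
  then show ?thesis using noise_radius_nonneg[of g t] by simp
qed

lemma descent_term_nonneg: "descent_term g F t \<ge> 0"
  unfolding descent_term_def using proxy_denom_pos[of g t] eta by simp

lemma mart_incr_bound_le:
  assumes t: "t \<in> {1..T}"
  shows "mart_incr_bound g F t \<le> \<eta> / \<gamma> * grad_bound T * (\<sigma>0 + \<sigma>1 * grad_bound T)"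
proof -
  have n: "norm (grad_at g t) \<le> grad_bound T" by (rule norm_grad_at_le[OF t])
  have r: "noise_radius g t \<le> \<sigma>0 + \<sigma>1 * grad_bound T"
    using noise_radius_le[of g t] n sig1 by (smt (verit) mult_left_mono)
  have e: "\<eta> / proxy_denom g t \<le> \<eta> / \<gamma>" using proxy_denom_ge[of g t] gamma eta by (simp add: frac_le)
  have "\<eta> / proxy_denom g t * norm (grad_at g t) * noise_radius g t \<le> \<eta> / \<gamma> * grad_bound T * (\<sigma>0 + \<sigma>1 * grad_bound T)"
    using e n r eta proxy_denom_pos[of g t] noise_radius_nonneg[of g t] gamma grad_bound_nonneg[of T]
    by (intro mult_mono) auto
  moreover have "0 \<le> \<eta> / \<gamma> * grad_bound T * (\<sigma>0 + \<sigma>1 * grad_bound T)"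
    using grad_bound_nonneg[of T] eta gamma sig0 sig1 by simp
  ultimately show ?thesis unfolding mart_incr_bound_def by auto
qed

lemma abs_mart_incr_le:
  assumes noise: "norm (g t - grad_at g t) \<le> noise_radius g t"
  shows "\<bar>mart_incr g F t\<bar> \<le> mart_incr_bound g F t"
proof (cases "gaps_le g F t")
  case True
  have "\<bar>grad_at g t \<bullet> (g t - grad_at g t)\<bar> \<le> norm (grad_at g t) * norm (g t - grad_at g t)"
    by (rule Cauchy_Schwarz_ineq2)
  also have "\<dots> \<le> norm (grad_at g t) * noise_radius g t" using noise by (intro mult_left_mono) auto
  finally have "\<eta> / proxy_denom g t * \<bar>grad_at g t \<bullet> (g t - grad_at g t)\<bar> \<le> \<eta> / proxy_denom g t * (norm (grad_at g t) * noise_radius g t)"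
    using eta proxy_denom_pos[of g t] by (intro mult_left_mono) auto
  then show ?thesis
    using True eta proxy_denom_pos[of g t] unfolding mart_incr_def mart_incr_bound_def by (simp add: abs_mult mult.assoc)
next
  case False then show ?thesis unfolding mart_incr_def mart_incr_bound_def by simp
qed

text \<open>This is what the choice \<open>\<theta> = 1 / (2 \<eta> R)\<close> in the exponential supermartingale needs:
  its quadratic compensator is paid for by half of the descent term.\<close>
lemma mart_incr_bound_sq_le:
  assumes R: "R > 0" "R = \<sigma>0 + \<sigma>1 * sqrt (2 * \<beta> * F)" and t: "t \<ge> 1"
  shows "(mart_incr_bound g F t)\<^sup>2 / (2 * \<eta> * R) \<le> descent_term g F t / 2"
proof (cases "gaps_le g F t")
  case True
  define n where "n = norm (grad_at g t)"
  define r where "r = noise_radius g t"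
  define H where "H = proxy_denom g t"
  have H: "H > 0" unfolding H_def by (rule proxy_denom_pos)
  have "r \<le> R" unfolding r_def using noise_radius_le_of_gaps_le[OF True t] R by simp
  moreover have "r \<le> H" unfolding r_def H_def by (rule noise_radius_le_proxy_denom)
  moreover have "r \<ge> 0" unfolding r_def by (rule noise_radius_nonneg)
  ultimately have rr: "r * r \<le> R * H" by (intro mult_mono) auto
  have "(mart_incr_bound g F t)\<^sup>2 / (2 * \<eta> * R) = \<eta> * n\<^sup>2 * (r * r) / (2 * R * H * H)"
    using True eta R(1) H unfolding mart_incr_bound_def n_def r_def H_def by (simp add: power2_eq_square field_simps)
  also have "\<dots> \<le> \<eta> * n\<^sup>2 * (R * H) / (2 * R * H * H)"
    using rr eta R(1) H by (intro divide_right_mono mult_left_mono) auto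
  also have "\<dots> = descent_term g F t / 2"
    using True eta R(1) H unfolding descent_term_def n_def H_def by (simp add: power2_eq_square field_simps)
  finally show ?thesis .
next
  case False then show ?thesis unfolding mart_incr_bound_def descent_term_def by simp
qed

lemma continuous_on_df: "continuous_on UNIV df"
  by (rule lipschitz_on_continuous_on[of \<beta>], rule lipschitz_onI)
    (use smooth smooth_nonneg in \<open>auto simp: dist_norm\<close>)

lemma borel_measurable_df [measurable]: "df \<in> borel_measurable borel"
  by (rule borel_measurable_continuous_onI[OF continuous_on_df])

lemma borel_measurable_f [measurable]: "f \<in> borel_measurable borel"
proof (rule borel_measurable_continuous_onI, rule continuous_at_imp_continuous_on, intro ballI)
  fix x show "isCont f x" using grad[of x] unfolding gderiv_def by (rule has_derivative_continuous)
qed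

context
  fixes N :: "'m measure" and G :: "nat \<Rightarrow> 'm \<Rightarrow> 'd"
begin

lemma borel_measurable_accum:
  assumes "measurable_before N G (Suc k)"
  shows "(\<lambda>\<omega>. accum (\<lambda>s. G s \<omega>) k) \<in> borel_measurable N"
proof -
  have [measurable]: "G s \<in> borel_measurable N" if "s \<in> {1..k}" for s
    using assms that unfolding measurable_before_def by auto
  show ?thesis unfolding accum_def by measurable
qed

lemma borel_measurable_iter:
  "measurable_before N G k \<Longrightarrow> (\<lambda>\<omega>. iter (\<lambda>s. G s \<omega>) k) \<in> borel_measurable N"
proof (induction k)
  case 0 then show ?case by (simp add: iter_def)
next
  case (Suc k)
  show ?case
  proof (cases "k = 0")
    case True then show ?thesis by simp
  next
    case False
    then have k: "k \<ge> 1" by simp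
    have [measurable]: "(\<lambda>\<omega>. iter (\<lambda>s. G s \<omega>) k) \<in> borel_measurable N"
      using Suc measurable_before_mono[of N G "Suc k" k] by simp
    have [measurable]: "(\<lambda>\<omega>. accum (\<lambda>s. G s \<omega>) k) \<in> borel_measurable N"
      using Suc borel_measurable_accum by simp
    have [measurable]: "G k \<in> borel_measurable N" using Suc k unfolding measurable_before_def by auto
    show ?thesis using iter_Suc[OF k] by simp
  qed
qed

lemma borel_measurable_grad_at:
  "measurable_before N G k \<Longrightarrow> (\<lambda>\<omega>. grad_at (\<lambda>s. G s \<omega>) k) \<in> borel_measurable N"
  unfolding grad_at_def using borel_measurable_iter by measurable

lemma borel_measurable_noise_radius:
  "measurable_before N G k \<Longrightarrow> (\<lambda>\<omega>. noise_radius (\<lambda>s. G s \<omega>) k) \<in> borel_measurable N"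
  unfolding noise_radius_def using borel_measurable_grad_at by measurable

lemma borel_measurable_proxy_denom:
  assumes "measurable_before N G k"
  shows "(\<lambda>\<omega>. proxy_denom (\<lambda>s. G s \<omega>) k) \<in> borel_measurable N"
proof -
  note [measurable] = borel_measurable_grad_at[OF assms] borel_measurable_noise_radius[OF assms]
  have [measurable]: "(\<lambda>\<omega>. accum (\<lambda>s. G s \<omega>) (k - 1)) \<in> borel_measurable N"
    using borel_measurable_accum[of "k - 1"] assms measurable_before_mono[of N G k "Suc (k - 1)"]
    by (cases k) (auto simp: accum_def)
  show ?thesis unfolding proxy_denom_def by measurable
qed

lemma pred_gaps_le: "measurable_before N G k \<Longrightarrow> Measurable.pred N (\<lambda>\<omega>. gaps_le (\<lambda>s. G s \<omega>) F k)"
proof -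
  assume G: "measurable_before N G k"
  have [measurable]: "(\<lambda>\<omega>. iter (\<lambda>s. G s \<omega>) j) \<in> borel_measurable N" if "j \<in> {1..k}" for j
    using borel_measurable_iter measurable_before_mono[OF G] that by auto
  show ?thesis unfolding gaps_le_def by measurable
qed

lemma borel_measurable_descent_term:
  assumes "measurable_before N G k"
  shows "(\<lambda>\<omega>. descent_term (\<lambda>s. G s \<omega>) F k) \<in> borel_measurable N"
proof -
  note [measurable] = borel_measurable_grad_at[OF assms] borel_measurable_proxy_denom[OF assms] pred_gaps_le[OF assms]
  show ?thesis unfolding descent_term_def by measurable
qed

lemma borel_measurable_mart_incr_bound:
  assumes "measurable_before N G k"
  shows "(\<lambda>\<omega>. mart_incr_bound (\<lambda>s. G s \<omega>) F k) \<in> borel_measurable N"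
proof -
  note [measurable] = borel_measurable_grad_at[OF assms] borel_measurable_proxy_denom[OF assms]
    pred_gaps_le[OF assms] borel_measurable_noise_radius[OF assms]
  show ?thesis unfolding mart_incr_bound_def by measurable
qed

lemma borel_measurable_mart_incr:
  assumes G: "measurable_before N G (Suc k)" and k: "k \<ge> 1"
  shows "(\<lambda>\<omega>. mart_incr (\<lambda>s. G s \<omega>) F k) \<in> borel_measurable N"
proof -
  have G': "measurable_before N G k" using measurable_before_mono[OF G] by simp
  note [measurable] = borel_measurable_grad_at[OF G'] borel_measurable_proxy_denom[OF G'] pred_gaps_le[OF G']
  have [measurable]: "G k \<in> borel_measurable N" using G k unfolding measurable_before_def by auto
  show ?thesis unfolding mart_incr_def by measurable
qed

end

end

section \<open>The high-probability bound\<close>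

locale adasgd_prob = adasgd f df \<beta> fstar \<eta> \<gamma> \<sigma>0 \<sigma>1 w1 + prob_space M
  for f :: "'d::euclidean_space \<Rightarrow> real" and df \<beta> fstar \<eta> \<gamma> \<sigma>0 \<sigma>1 w1 and M :: "'m measure" +
  fixes G :: "nat \<Rightarrow> 'm \<Rightarrow> 'd" and T :: nat
  assumes G_meas [measurable]: "\<And>t. G t \<in> borel_measurable M"
    and unbiased: "\<And>t b. t \<in> {1..T} \<Longrightarrow> b \<in> Basis \<Longrightarrow>
        AE \<omega> in M. real_cond_exp M (adasgd_filt M G t) (\<lambda>\<omega>. G t \<omega> \<bullet> b) \<omega>
                    = df (adasgd_w w1 \<eta> \<gamma> (\<lambda>s. G s \<omega>) t) \<bullet> b"
    and noise: "\<And>t. t \<in> {1..T} \<Longrightarrow>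
        AE \<omega> in M. (norm (G t \<omega> - df (adasgd_w w1 \<eta> \<gamma> (\<lambda>s. G s \<omega>) t)))\<^sup>2
                    \<le> \<sigma>0\<^sup>2 + \<sigma>1\<^sup>2 * (norm (df (adasgd_w w1 \<eta> \<gamma> (\<lambda>s. G s \<omega>) t)))\<^sup>2"
begin

lemma measurable_before_M: "measurable_before M G k"
  unfolding measurable_before_def by simp

lemma measurable_before_filt: "measurable_before (adasgd_filt M G t) G t"
  unfolding measurable_before_def using measurable_adasgd_filt by blast

lemma subalgebra_filt: "subalgebra M (adasgd_filt M G t)"
  by (rule subalgebra_adasgd_filt[OF G_meas])

lemma AE_noise_le_radius:
  "t \<in> {1..T} \<Longrightarrow> AE \<omega> in M. norm (G t \<omega> - grad_at (\<lambda>s. G s \<omega>) t) \<le> noise_radius (\<lambda>s. G s \<omega>) t"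
proof -
  assume t: "t \<in> {1..T}"
  show ?thesis using noise[OF t]
    by eventually_elim (simp add: noise_radius_def grad_at_def iter_def real_le_rsqrt)
qed

lemma AE_all_noise_le_radius:
  "AE \<omega> in M. \<forall>t\<in>{1..T}. norm (G t \<omega> - grad_at (\<lambda>s. G s \<omega>) t) \<le> noise_radius (\<lambda>s. G s \<omega>) t"
  by (rule AE_finite_allI) (simp_all add: AE_noise_le_radius)

lemma AE_norm_oracle_le:
  assumes t: "t \<in> {1..T}"
  shows "AE \<omega> in M. norm (G t \<omega>) \<le> grad_bound T + (\<sigma>0 + \<sigma>1 * grad_bound T)"
  using AE_noise_le_radius[OF t]
proof eventually_elim
  case (elim \<omega>)
  have n: "norm (grad_at (\<lambda>s. G s \<omega>) t) \<le> grad_bound T" by (rule norm_grad_at_le[OF t])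
  have "norm (G t \<omega>) \<le> norm (grad_at (\<lambda>s. G s \<omega>) t) + noise_radius (\<lambda>s. G s \<omega>) t"
    using elim norm_triangle_sub[of "G t \<omega>" "grad_at (\<lambda>s. G s \<omega>) t"] by linarith
  also have "noise_radius (\<lambda>s. G s \<omega>) t \<le> \<sigma>0 + \<sigma>1 * grad_bound T"
    using noise_radius_le[of "\<lambda>s. G s \<omega>" t] n sig1 by (smt (verit) mult_left_mono)
  finally show ?case using n by simp
qed

lemma integral_mult_mart_incr_eq_0:
  assumes t: "t \<in> {1..T}" and h: "h \<in> borel_measurable (adasgd_filt M G t)"
    and h_bound: "AE \<omega> in M. \<bar>h \<omega>\<bar> \<le> Bh"
  shows "(\<integral>\<omega>. h \<omega> * mart_incr (\<lambda>s. G s \<omega>) F t \<partial>M) = 0"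
proof -
  define c where "c \<omega> = (if gaps_le (\<lambda>s. G s \<omega>) F t then - (\<eta> / proxy_denom (\<lambda>s. G s \<omega>) t) else 0)" for \<omega>
  note [measurable] = h borel_measurable_grad_at[OF measurable_before_filt]
    borel_measurable_proxy_denom[OF measurable_before_filt] pred_gaps_le[OF measurable_before_filt]
  have hc: "(\<lambda>\<omega>. h \<omega> * c \<omega>) \<in> borel_measurable (adasgd_filt M G t)" unfolding c_def by measurable
  have hc_bound: "AE \<omega> in M. \<bar>h \<omega> * c \<omega>\<bar> \<le> Bh * (\<eta> / \<gamma>)"
    using h_bound
  proof eventually_elim
    case (elim \<omega>)
    have "\<bar>c \<omega>\<bar> \<le> \<eta> / \<gamma>"
      unfolding c_def using proxy_denom_ge[of "\<lambda>s. G s \<omega>" t] proxy_denom_pos[of "\<lambda>s. G s \<omega>" t] eta gamma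
      by (auto simp: frac_le)
    then have "\<bar>h \<omega>\<bar> * \<bar>c \<omega>\<bar> \<le> Bh * (\<eta> / \<gamma>)"
      using elim abs_ge_zero[of "h \<omega>"] by (intro mult_mono) auto
    then show ?case by (simp add: abs_mult)
  qed
  have N: "sigma_finite_subalgebra M (adasgd_filt M G t)"
    using subalgebra_filt finite_measure_axioms
    by (intro finite_measure_subalgebra_is_sigma_finite) (simp add: finite_measure_subalgebra_def finite_measure_subalgebra_axioms_def)
  have cond_exp: "AE \<omega> in M. real_cond_exp M (adasgd_filt M G t) (\<lambda>\<omega>. G t \<omega> \<bullet> b) \<omega> = grad_at (\<lambda>s. G s \<omega>) t \<bullet> b"
    if "b \<in> Basis" for b
    using unbiased[OF t that] by (simp add: grad_at_def iter_def)
  have "(\<integral>\<omega>. (h \<omega> * c \<omega>) * (grad_at (\<lambda>s. G s \<omega>) t \<bullet> (G t \<omega> - grad_at (\<lambda>s. G s \<omega>) t)) \<partial>M) = 0"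
    by (rule integral_mult_inner_cond_centered_eq_0[OF N finite_measure_axioms G_meas AE_norm_oracle_le[OF t]
          borel_measurable_grad_at[OF measurable_before_filt] norm_grad_at_le[OF t] hc hc_bound cond_exp])
  moreover have "(\<lambda>\<omega>. h \<omega> * mart_incr (\<lambda>s. G s \<omega>) F t)
      = (\<lambda>\<omega>. (h \<omega> * c \<omega>) * (grad_at (\<lambda>s. G s \<omega>) t \<bullet> (G t \<omega> - grad_at (\<lambda>s. G s \<omega>) t)))"
    unfolding mart_incr_def c_def by auto
  ultimately show ?thesis by (simp only:)
qed

lemma mart_incr_predictably_bounded:
  assumes "t \<le> T"
  shows "predictably_bounded_mart_diff M (adasgd_filt M G)
    (\<lambda>s \<omega>. mart_incr (\<lambda>s. G s \<omega>) F s) (\<lambda>s \<omega>. mart_incr_bound (\<lambda>s. G s \<omega>) F s) t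
    (\<eta> / \<gamma> * grad_bound T * (\<sigma>0 + \<sigma>1 * grad_bound T))"
proof (rule predictably_bounded_mart_diff.intro[OF prob_space_axioms predictably_bounded_mart_diff_axioms.intro])
  show "subalgebra M (adasgd_filt M G k)" for k by (rule subalgebra_filt)
  show "(\<lambda>\<omega>. mart_incr (\<lambda>s. G s \<omega>) F s) \<in> borel_measurable (adasgd_filt M G k)" if "1 \<le> s" "s < k" for s k
    using that measurable_before_mono[OF measurable_before_filt, of "Suc s" k]
    by (intro borel_measurable_mart_incr) auto
  show "(\<lambda>\<omega>. mart_incr_bound (\<lambda>s. G s \<omega>) F s) \<in> borel_measurable (adasgd_filt M G k)" if "s \<le> k" for s k
    using that measurable_before_mono[OF measurable_before_filt, of s k]
    by (intro borel_measurable_mart_incr_bound) auto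
  show "(\<lambda>\<omega>. mart_incr (\<lambda>s. G s \<omega>) F s) \<in> borel_measurable M" if "s \<in> {1..t}" for s
    using that by (intro borel_measurable_mart_incr measurable_before_M) auto
  show "AE \<omega> in M. \<bar>mart_incr (\<lambda>s. G s \<omega>) F s\<bar> \<le> mart_incr_bound (\<lambda>s. G s \<omega>) F s" if "s \<in> {1..t}" for s
  proof -
    have "s \<in> {1..T}" using that assms by simp
    from AE_noise_le_radius[OF this] show ?thesis by eventually_elim (rule abs_mart_incr_le)
  qed
  show "AE \<omega> in M. mart_incr_bound (\<lambda>s. G s \<omega>) F s \<le> \<eta> / \<gamma> * grad_bound T * (\<sigma>0 + \<sigma>1 * grad_bound T)"
    if "s \<in> {1..t}" for s
    using that assms by (intro AE_I2 mart_incr_bound_le) auto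
  show "(\<integral>\<omega>. h \<omega> * mart_incr (\<lambda>s. G s \<omega>) F k \<partial>M) = 0"
    if "k \<in> {1..t}" "h \<in> borel_measurable (adasgd_filt M G k)" "AE \<omega> in M. \<bar>h \<omega>\<bar> \<le> Bh" for k h Bh
    using that assms by (intro integral_mult_mart_incr_eq_0) auto
qed

definition noise_violated :: "'m set" where
  "noise_violated = {\<omega> \<in> space M.
     \<not> (\<forall>t\<in>{1..T}. norm (G t \<omega> - grad_at (\<lambda>s. G s \<omega>) t) \<le> noise_radius (\<lambda>s. G s \<omega>) t)}"

definition deviation :: "real \<Rightarrow> real \<Rightarrow> nat \<Rightarrow> 'm set" where
  "deviation F b t = {\<omega> \<in> space M.
     (\<Sum>s=1..t. descent_term (\<lambda>s. G s \<omega>) F s) / 2 + b < (\<Sum>s=1..t. mart_incr (\<lambda>s. G s \<omega>) F s)}"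

lemma sets_noise_violated [measurable]: "noise_violated \<in> sets M"
proof -
  have [measurable]: "(\<lambda>\<omega>. grad_at (\<lambda>s. G s \<omega>) t) \<in> borel_measurable M"
    "(\<lambda>\<omega>. noise_radius (\<lambda>s. G s \<omega>) t) \<in> borel_measurable M" for t
    by (simp_all add: borel_measurable_grad_at borel_measurable_noise_radius measurable_before_M)
  show ?thesis unfolding noise_violated_def by measurable
qed

lemma prob_noise_violated: "prob noise_violated = 0"
  using AE_iff_measurable[OF sets_noise_violated] AE_all_noise_le_radius
  unfolding noise_violated_def by (simp add: emeasure_eq_measure)

lemma sets_deviation [measurable]: "deviation F b t \<in> sets M"
proof -
  have [measurable]: "(\<lambda>\<omega>. mart_incr (\<lambda>s. G s \<omega>) F s) \<in> borel_measurable M" if "s \<in> {1..t}" for s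
    using that by (simp add: borel_measurable_mart_incr measurable_before_M)
  have [measurable]: "(\<lambda>\<omega>. descent_term (\<lambda>s. G s \<omega>) F s) \<in> borel_measurable M" for s
    by (simp add: borel_measurable_descent_term measurable_before_M)
  show ?thesis unfolding deviation_def by measurable
qed

definition exp_mart_incr :: "real \<Rightarrow> real \<Rightarrow> nat \<Rightarrow> 'm \<Rightarrow> real" where
  "exp_mart_incr F \<theta> t \<omega> = exp (\<theta> * (\<Sum>s=1..t. mart_incr (\<lambda>s. G s \<omega>) F s)
     - \<theta>\<^sup>2 * (\<Sum>s=1..t. (mart_incr_bound (\<lambda>s. G s \<omega>) F s)\<^sup>2))"

lemma borel_measurable_exp_mart_incr [measurable]: "exp_mart_incr F \<theta> t \<in> borel_measurable M"
proof -
  have [measurable]: "(\<lambda>\<omega>. mart_incr (\<lambda>s. G s \<omega>) F s) \<in> borel_measurable M" if "s \<in> {1..t}" for s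
    using that by (simp add: borel_measurable_mart_incr measurable_before_M)
  have [measurable]: "(\<lambda>\<omega>. mart_incr_bound (\<lambda>s. G s \<omega>) F s) \<in> borel_measurable M" for s
    by (simp add: borel_measurable_mart_incr_bound measurable_before_M)
  show ?thesis unfolding exp_mart_incr_def[abs_def] by measurable
qed

lemma prob_exp_mart_incr_ge:
  assumes t: "t \<le> T" and c: "c > 0"
  shows "prob {\<omega> \<in> space M. c \<le> exp_mart_incr F \<theta> t \<omega>} \<le> 1 / c"
proof -
  interpret D: predictably_bounded_mart_diff M "adasgd_filt M G"
    "\<lambda>s \<omega>. mart_incr (\<lambda>s. G s \<omega>) F s" "\<lambda>s \<omega>. mart_incr_bound (\<lambda>s. G s \<omega>) F s" t
    "\<eta> / \<gamma> * grad_bound T * (\<sigma>0 + \<sigma>1 * grad_bound T)"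
    by (rule mart_incr_predictably_bounded[OF t])
  have eq: "exp_mart_incr F \<theta> t = D.exp_mart \<theta> t"
    unfolding exp_mart_incr_def D.exp_mart_def by simp
  have "AE \<omega> in M. 0 \<le> D.exp_mart \<theta> t \<omega>" by (simp add: D.exp_mart_pos less_imp_le)
  then have "prob {\<omega> \<in> space M. c \<le> exp_mart_incr F \<theta> t \<omega>} \<le> (\<integral>\<omega>. D.exp_mart \<theta> t \<omega> \<partial>M) / c"
    unfolding eq by (rule integral_Markov_inequality_measure[OF D.integrable_exp_mart[OF order_refl] sets.top _ c])
  also have "\<dots> \<le> 1 / c" using D.integral_exp_mart_le_1 c by (intro divide_right_mono) auto
  finally show ?thesis .
qed

lemma deviation_subset_exp_mart_incr_ge:
  assumes R: "R > 0" "R = \<sigma>0 + \<sigma>1 * sqrt (2 * \<beta> * F)" and c: "c > 0"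
  shows "deviation F (2 * ln c * \<eta> * R) t \<subseteq> {\<omega> \<in> space M. c \<le> exp_mart_incr F (1 / (2 * \<eta> * R)) t \<omega>}"
proof
  fix \<omega> assume \<omega>: "\<omega> \<in> deviation F (2 * ln c * \<eta> * R) t"
  define \<theta> where "\<theta> = 1 / (2 * \<eta> * R)"
  have \<theta>: "\<theta> > 0" unfolding \<theta>_def using R eta by simp
  define Z where "Z = (\<Sum>s=1..t. mart_incr (\<lambda>s. G s \<omega>) F s)"
  define V where "V = (\<Sum>s=1..t. descent_term (\<lambda>s. G s \<omega>) F s)"
  define Y where "Y = (\<Sum>s=1..t. (mart_incr_bound (\<lambda>s. G s \<omega>) F s)\<^sup>2)"
  have "\<theta> * Y = (\<Sum>s=1..t. (mart_incr_bound (\<lambda>s. G s \<omega>) F s)\<^sup>2 / (2 * \<eta> * R))"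
    unfolding Y_def \<theta>_def by (simp add: sum_distrib_left)
  also have "\<dots> \<le> V / 2"
    unfolding V_def sum_divide_distrib using mart_incr_bound_sq_le[OF R] by (intro sum_mono) auto
  finally have "\<theta>\<^sup>2 * Y \<le> \<theta> * (V / 2)" using \<theta> by (simp add: power2_eq_square mult_left_mono mult.assoc)
  moreover have "\<theta> * (V / 2) + ln c < \<theta> * Z"
  proof -
    have "V / 2 + 2 * ln c * \<eta> * R < Z" using \<omega> unfolding deviation_def V_def Z_def by auto
    moreover have "\<theta> * (2 * ln c * \<eta> * R) = ln c" unfolding \<theta>_def using R eta by simp
    ultimately show ?thesis using \<theta> by (metis distrib_left mult_strict_left_mono)
  qed
  ultimately have "ln c < \<theta> * Z - \<theta>\<^sup>2 * Y" by linarith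
  then have "exp (ln c) < exp_mart_incr F \<theta> t \<omega>" unfolding exp_mart_incr_def Z_def Y_def by simp
  then show "\<omega> \<in> {\<omega> \<in> space M. c \<le> exp_mart_incr F (1 / (2 * \<eta> * R)) t \<omega>}"
    using \<omega> c unfolding deviation_def \<theta>_def by simp
qed

text \<open>With zero noise radius on the stopped event the oracle is exact, so no increment can deviate.\<close>
lemma deviation_subset_noise_violated:
  assumes t: "t \<in> {1..T}" and R: "R = \<sigma>0 + \<sigma>1 * sqrt (2 * \<beta> * F)" "R = 0" and b: "0 \<le> b"
  shows "deviation F b t \<subseteq> noise_violated"
proof
  fix \<omega> assume \<omega>: "\<omega> \<in> deviation F b t"
  show "\<omega> \<in> noise_violated"
  proof (rule ccontr)
    assume "\<omega> \<notin> noise_violated"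
    then have noise: "\<forall>s\<in>{1..T}. norm (G s \<omega> - grad_at (\<lambda>s. G s \<omega>) s) \<le> noise_radius (\<lambda>s. G s \<omega>) s"
      using \<omega> unfolding noise_violated_def deviation_def by auto
    have "mart_incr (\<lambda>s. G s \<omega>) F s = 0" if s: "s \<in> {1..t}" for s
    proof (cases "gaps_le (\<lambda>s. G s \<omega>) F s")
      case True
      have "s \<in> {1..T}" using s t by auto
      then have "norm (G s \<omega> - grad_at (\<lambda>s. G s \<omega>) s) \<le> noise_radius (\<lambda>s. G s \<omega>) s"
        using noise by blast
      also have "\<dots> \<le> 0" using noise_radius_le_of_gaps_le[OF True] s R by simp
      finally show ?thesis unfolding mart_incr_def by simp
    next
      case False then show ?thesis unfolding mart_incr_def by simp
    qed
    moreover have "0 \<le> (\<Sum>s=1..t. descent_term (\<lambda>s. G s \<omega>) F s)" by (simp add: sum_nonneg descent_term_nonneg)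
    ultimately show False using \<omega> b unfolding deviation_def by auto
  qed
qed

lemma prob_deviation_le:
  assumes t: "t \<in> {1..T}" and R: "R = \<sigma>0 + \<sigma>1 * sqrt (2 * \<beta> * F)" and F: "F \<ge> 0" and \<delta>: "0 < \<delta>"
  shows "prob (deviation F (2 * ln (real T / \<delta>) * \<eta> * R) t) \<le> \<delta> / real T"
proof (cases "R > 0")
  case True
  have c: "real T / \<delta> > 0" using t \<delta> by simp
  have "prob (deviation F (2 * ln (real T / \<delta>) * \<eta> * R) t)
      \<le> prob {\<omega> \<in> space M. real T / \<delta> \<le> exp_mart_incr F (1 / (2 * \<eta> * R)) t \<omega>}"
    by (rule finite_measure_mono[OF deviation_subset_exp_mart_incr_ge[OF True R c]]) measurable
  also have "\<dots> \<le> 1 / (real T / \<delta>)" using t by (intro prob_exp_mart_incr_ge c) simp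
  finally show ?thesis by simp
next
  case False
  then have "R = 0" using R sig0 sig1 F smooth_nonneg by (smt (verit) mult_nonneg_nonneg real_sqrt_ge_zero)
  then have "prob (deviation F (2 * ln (real T / \<delta>) * \<eta> * R) t) \<le> prob noise_violated"
    using deviation_subset_noise_violated[OF t R] by (intro finite_measure_mono) simp_all
  moreover have "0 \<le> \<delta> / real T" using \<delta> by simp
  ultimately show ?thesis using prob_noise_violated by linarith
qed

lemma compl_gaps_le_subset:
  assumes T: "T \<ge> 1" and \<delta>: "0 < \<delta>" "\<delta> < 1" and F: "F \<ge> 0" and R: "R = \<sigma>0 + \<sigma>1 * sqrt (2 * \<beta> * F)"
    and Cln: "ln (1 + (2 * \<sigma>0\<^sup>2 * real T + 8 * (1 + \<sigma>1\<^sup>2) * (\<eta>\<^sup>2 * \<beta>\<^sup>2 * real T ^ 3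
      + \<beta> * (f w1 - fstar) * real T)) / \<gamma>\<^sup>2) \<le> Cln"
    and F_big: "(f w1 - fstar) + (2 * ln (real T / \<delta>) + 5 / 2 * Cln) * \<eta> * R + \<beta> / 2 * \<eta>\<^sup>2 * Cln \<le> F"
  shows "space M - {\<omega> \<in> space M. gaps_le (\<lambda>s. G s \<omega>) F (T + 1)}
    \<subseteq> noise_violated \<union> (\<Union>t\<in>{1..T}. deviation F (2 * ln (real T / \<delta>) * \<eta> * R) t)"
proof
  fix \<omega> assume \<omega>: "\<omega> \<in> space M - {\<omega> \<in> space M. gaps_le (\<lambda>s. G s \<omega>) F (T + 1)}"
  show "\<omega> \<in> noise_violated \<union> (\<Union>t\<in>{1..T}. deviation F (2 * ln (real T / \<delta>) * \<eta> * R) t)"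
  proof (rule ccontr)
    assume "\<omega> \<notin> noise_violated \<union> (\<Union>t\<in>{1..T}. deviation F (2 * ln (real T / \<delta>) * \<eta> * R) t)"
    then have noise: "\<forall>s\<in>{1..T}. norm (G s \<omega> - grad_at (\<lambda>s. G s \<omega>) s) \<le> noise_radius (\<lambda>s. G s \<omega>) s"
      and conc: "\<forall>t\<in>{1..T}. (\<Sum>s=1..t. mart_incr (\<lambda>s. G s \<omega>) F s)
        \<le> (\<Sum>s=1..t. descent_term (\<lambda>s. G s \<omega>) F s) / 2 + 2 * ln (real T / \<delta>) * \<eta> * R"
      using \<omega> unfolding noise_violated_def deviation_def by (auto simp: not_less)
    have "accum (\<lambda>s. G s \<omega>) T / \<gamma>\<^sup>2 \<le> 1 + (2 * \<sigma>0\<^sup>2 * real T + 8 * (1 + \<sigma>1\<^sup>2) * (\<eta>\<^sup>2 * \<beta>\<^sup>2 * real T ^ 3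
        + \<beta> * (f w1 - fstar) * real T)) / \<gamma>\<^sup>2"
      using accum_le[OF noise] gamma by (simp add: field_simps)
    then have "ln (accum (\<lambda>s. G s \<omega>) T / \<gamma>\<^sup>2) \<le> Cln"
      using Cln accum_pos[of "\<lambda>s. G s \<omega>" T] gamma
      by (smt (verit) ln_le_cancel_iff zero_less_divide_iff zero_less_power2)
    moreover have "0 \<le> ln (real T / \<delta>)" using T \<delta> by simp
    ultimately have "gaps_le (\<lambda>s. G s \<omega>) F (T + 1)"
      using gaps_le_of_concentration[OF T noise conc R F _ _ F_big] by simp
    then show False using \<omega> by simp
  qed
qed

lemma prob_gaps_le_ge:
  assumes T: "T \<ge> 1" and \<delta>: "0 < \<delta>" "\<delta> < 1" and F: "F \<ge> 0" and R: "R = \<sigma>0 + \<sigma>1 * sqrt (2 * \<beta> * F)"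
    and Cln: "ln (1 + (2 * \<sigma>0\<^sup>2 * real T + 8 * (1 + \<sigma>1\<^sup>2) * (\<eta>\<^sup>2 * \<beta>\<^sup>2 * real T ^ 3
      + \<beta> * (f w1 - fstar) * real T)) / \<gamma>\<^sup>2) \<le> Cln"
    and F_big: "(f w1 - fstar) + (2 * ln (real T / \<delta>) + 5 / 2 * Cln) * \<eta> * R + \<beta> / 2 * \<eta>\<^sup>2 * Cln \<le> F"
  shows "1 - \<delta> \<le> prob {\<omega> \<in> space M. gaps_le (\<lambda>s. G s \<omega>) F (T + 1)}"
proof -
  define A where "A = {\<omega> \<in> space M. gaps_le (\<lambda>s. G s \<omega>) F (T + 1)}"
  define D where "D = (\<Union>t\<in>{1..T}. deviation F (2 * ln (real T / \<delta>) * \<eta> * R) t)"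
  have [measurable]: "A \<in> sets M"
    using pred_gaps_le[OF measurable_before_M] unfolding A_def by measurable
  have [measurable]: "D \<in> sets M" unfolding D_def by measurable
  have "prob (space M - A) \<le> prob noise_violated + prob D"
    using compl_gaps_le_subset[OF T \<delta> F R Cln F_big] unfolding A_def[symmetric] D_def[symmetric]
    by (meson finite_measure_mono measure_Un_le order_trans sets.Un sets_noise_violated \<open>D \<in> sets M\<close>)
  also have "prob D \<le> (\<Sum>t\<in>{1..T}. prob (deviation F (2 * ln (real T / \<delta>) * \<eta> * R) t))"
    unfolding D_def by (rule finite_measure_subadditive_finite) auto
  also have "\<dots> \<le> (\<Sum>t\<in>{1..T}. \<delta> / real T)"
    using prob_deviation_le[OF _ R F \<delta>(1)] by (intro sum_mono) auto
  also have "\<dots> = \<delta>" using T by simp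
  finally have "1 - \<delta> \<le> prob A" using prob_compl[of A] prob_noise_violated by simp
  then show ?thesis unfolding A_def .
qed

end

theorem lemma2:
  fixes f :: "'d::euclidean_space \<Rightarrow> real" and df :: "'d \<Rightarrow> 'd"
    and M :: "'m measure" and G :: "nat \<Rightarrow> 'm \<Rightarrow> 'd"
    and w1 :: 'd and \<beta> fstar \<eta> \<gamma> \<sigma>0 \<sigma>1 \<delta> :: real and T :: nat
  assumes grad: "\<And>x. GDERIV f x :> df x"
    and smooth: "\<And>x y. norm (df x - df y) \<le> \<beta> * norm (x - y)"
    and fmin: "\<And>x. fstar \<le> f x" and fmin_att: "\<exists>x. f x = fstar"
    and eta: "\<eta> > 0" and gamma: "\<gamma> > 0"
    and sig0: "\<sigma>0 \<ge> 0" and sig1: "\<sigma>1 \<ge> 0"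
    and T: "T \<ge> 1"
    and delta: "0 < \<delta>" "\<delta> < 1"
    and M: "prob_space M"
    and G_meas: "\<And>t. G t \<in> borel_measurable M"
    and unbiased: "\<And>t b. t \<in> {1..T} \<Longrightarrow> b \<in> Basis \<Longrightarrow>
        AE \<omega> in M. real_cond_exp M (adasgd_filt M G t) (\<lambda>\<omega>. G t \<omega> \<bullet> b) \<omega>
                    = df (adasgd_w w1 \<eta> \<gamma> (\<lambda>s. G s \<omega>) t) \<bullet> b"
    and noise: "\<And>t. t \<in> {1..T} \<Longrightarrow>
        AE \<omega> in M. (norm (G t \<omega> - df (adasgd_w w1 \<eta> \<gamma> (\<lambda>s. G s \<omega>) t)))\<^sup>2
                    \<le> \<sigma>0\<^sup>2 + \<sigma>1\<^sup>2 * (norm (df (adasgd_w w1 \<eta> \<gamma> (\<lambda>s. G s \<omega>) t)))\<^sup>2"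
  shows "let \<Delta>1 = f w1 - fstar;
             C1 = log 2 (1 + (2 * \<sigma>0\<^sup>2 * real T
                    + 8 * (1 + \<sigma>1\<^sup>2) * (\<eta>\<^sup>2 * \<beta>\<^sup>2 * real T ^ 3 + \<beta> * \<Delta>1 * real T)) / \<gamma>\<^sup>2);
             L = log 2 (real T / \<delta>);
             F = 2 * \<Delta>1 + (3 * L + 4 * C1) * \<eta> * \<sigma>0
                 + (9 * L\<^sup>2 + 16 * C1\<^sup>2) * \<eta>\<^sup>2 * \<beta> * \<sigma>1\<^sup>2 + \<eta>\<^sup>2 * \<beta> * C1
         in measure M {\<omega> \<in> space M.
               Max ((\<lambda>t. f (adasgd_w w1 \<eta> \<gamma> (\<lambda>s. G s \<omega>) t)) ` {1..T+1}) - fstar \<le> F}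
            \<ge> 1 - \<delta>"
proof -
  interpret adasgd_prob f df \<beta> fstar \<eta> \<gamma> \<sigma>0 \<sigma>1 w1 M G T
    by (rule adasgd_prob.intro[OF adasgd.intro[OF grad smooth fmin eta gamma sig0 sig1] M
          adasgd_prob_axioms.intro[OF G_meas unbiased noise]])
  define \<Delta>1 where "\<Delta>1 = f w1 - fstar"
  define c where "c = 1 + (2 * \<sigma>0\<^sup>2 * real T + 8 * (1 + \<sigma>1\<^sup>2) * (\<eta>\<^sup>2 * \<beta>\<^sup>2 * real T ^ 3 + \<beta> * \<Delta>1 * real T)) / \<gamma>\<^sup>2"
  define F where "F = 2 * \<Delta>1 + (3 * log 2 (real T / \<delta>) + 4 * log 2 c) * \<eta> * \<sigma>0
    + (9 * (log 2 (real T / \<delta>))\<^sup>2 + 16 * (log 2 c)\<^sup>2) * \<eta>\<^sup>2 * \<beta> * \<sigma>1\<^sup>2 + \<eta>\<^sup>2 * \<beta> * log 2 c"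
  have \<Delta>1: "0 \<le> \<Delta>1" unfolding \<Delta>1_def using fmin by simp
  have "1 \<le> real T / \<delta>" using T delta by simp
  moreover have "1 \<le> c" unfolding c_def using \<Delta>1 smooth_nonneg by simp
  ultimately have "0 \<le> F" and F_big: "\<Delta>1 + (2 * ln (real T / \<delta>) + 5 / 2 * ln c) * \<eta> * (\<sigma>0 + \<sigma>1 * sqrt (2 * \<beta> * F))
      + \<beta> / 2 * \<eta>\<^sup>2 * ln c \<le> F"
    using gap_bound_log2_self_bounding[OF _ _ \<Delta>1 smooth_nonneg eta sig0 sig1 F_def] by simp_all
  then have "1 - \<delta> \<le> prob {\<omega> \<in> space M. gaps_le (\<lambda>s. G s \<omega>) F (T + 1)}"
    using prob_gaps_le_ge[OF T delta \<open>0 \<le> F\<close> refl order_refl] unfolding c_def \<Delta>1_def by simp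
  then show ?thesis
    unfolding Let_def Max_gap_le_iff_gaps_le F_def c_def \<Delta>1_def by simp
qed

end
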